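(* Consider the one-dimensional setting $D_f = (-a,a)$, $D_c = (-b,-a)\cup(a,b)$, $D = (-L,-b)\cup(b,L)$ with $0<a<b<L$, $\Gamma=\{-L,L\}$, and $k_\varepsilon(x) = k_{\rm per}(x/\varepsilon)$ where $k_{\rm per}$ is a measurable $1$-periodic function with $0<\alpha\le k_{\rm per}\le\beta$, and where $2a$, $b-a$ are integer multiples of $\varepsilon$. For $\overline{k}>0$, let $(\overline{u},u_\varepsilon)$ be the unique minimizer of $$ \frac12\int_D\overline k|\overline u'|^2 + \frac12\int_{D_f}k_\varepsilon|u_\varepsilon'|^2+\frac12\int_{D_c}\Big(\frac12\overline k|\overline u'|^2+\frac12k_\varepsilon|u_\varepsilon'|^2\Big) $$ over $\overline u\in H^1(-L,-a)\cup(a,L))$ with $\overline u(\pm L)=\pm L$, $u_\varepsilon\in H^1(-b,b)$, subject to $\int_{D_c}(\overline u-u_\varepsilon)'\phi'+(\overline u-u_\varepsilon)\phi = 0$ for all $\phi\in H^1(D_c)$. Then $\overline u' = m/\overline k$ on $D$, where $m=m(\overline k)$ is independent of $\varepsilon$ and satisfies $$ |D\cup D_c\cup D_f| = m\Big(\frac{|D|}{\overline k}+\frac{|D_f|}{k^\star}+|D_c|\Big\langle\frac{2}{\overline k+k_{\rm per}}\Big\rangle\Big), $$ with $k^\star = \langle k_{\rm per}^{-1}\rangle^{-1}$. Consequently the function $J_{1D}(\overline k)=\int_D|\overline u'-1|^2$ attains its minimum over $\overline k\in(0,\infty)$ at a unique point $\overline k^{\rm opt}$, characterized as the unique positive solution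 of $$ |D_c\cup D_f| = |D_f|\frac{\overline k^{\rm opt}}{k^\star} + |D_c|\,\overline k^{\rm opt}\Big\langle\frac{2}{\overline k^{\rm opt}+k_{\rm per}}\Big\rangle, $$ and $\overline k^{\rm opt}>k^\star$ whenever $k_{\rm per}$ is not a.e. constant.
   Context: $\langle g\rangle = \int_0^1 g(y)\,dy$ denotes the average over the periodic cell of a $1$-periodic function $g$. $|\cdot|$ denotes one-dimensional Lebesgue measure (total length). $H^1$ of a union of intervals means $H^1$ of the interior of the closure of that union, so $\overline u\in H^1((-L,-a)\cup(a,L))$ with $D\cup D_c=(-L,-a)\cup(a,L)$ and $D_c\cup D_f=(-b,b)$. *)

theory Defs
  imports "HOL-Analysis.Analysis"
begin

definition Df_set :: "real \<Rightarrow> real set" where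
  "Df_set a = {-a<..<a}"

definition Dc_set :: "real \<Rightarrow> real \<Rightarrow> real set" where
  "Dc_set a b = {-b<..<-a} \<union> {a<..<b}"

definition D_set :: "real \<Rightarrow> real \<Rightarrow> real set" where
  "D_set b L = {-L<..<-b} \<union> {b<..<L}"

definition cell_avg :: "(real \<Rightarrow> real) \<Rightarrow> real" where
  "cell_avg g = (LINT y:{0..1}|lebesgue. g y)"

definition kstar :: "(real \<Rightarrow> real) \<Rightarrow> real" where
  "kstar kper = inverse (cell_avg (\<lambda>y. inverse (kper y)))"

text \<open>One-dimensional H^1 on the open interval (p,q): u is (the continuous representative)
  u(x) = u(p) + int_p^x g with weak derivative g in L^2(p,q).\<close>
definition H1_on :: "real \<Rightarrow> real \<Rightarrow> (real \<Rightarrow> real) \<Rightarrow> (real \<Rightarrow> real) \<Rightarrow> bool" where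
  "H1_on p q u g \<longleftrightarrow>
     set_integrable lebesgue {p<..<q} g \<and>
     set_integrable lebesgue {p<..<q} (\<lambda>x. (g x)^2) \<and>
     (\<forall>x\<in>{p..q}. u x = u p + (LINT t:{p..x}|lebesgue. g t))"

definition admissible ::
  "real \<Rightarrow> real \<Rightarrow> real \<Rightarrow> (real \<Rightarrow> real) \<Rightarrow> (real \<Rightarrow> real) \<Rightarrow> (real \<Rightarrow> real) \<Rightarrow> (real \<Rightarrow> real) \<Rightarrow> bool"
  where
  "admissible a b L ubar gbar u g \<longleftrightarrow>
     H1_on (-L) (-a) ubar gbar \<and> H1_on a L ubar gbar \<and>
     ubar (-L) = -L \<and> ubar L = L \<and>
     H1_on (-b) b u g \<and>
     (\<forall>\<phi> \<psi>. H1_on (-b) (-a) \<phi> \<psi> \<and> H1_on a b \<phi> \<psi> \<longrightarrow>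
        (LINT x:Dc_set a b|lebesgue. (gbar x - g x) * \<psi> x + (ubar x - u x) * \<phi> x) = 0)"

definition energy ::
  "real \<Rightarrow> real \<Rightarrow> real \<Rightarrow> (real \<Rightarrow> real) \<Rightarrow> real \<Rightarrow> real \<Rightarrow> (real \<Rightarrow> real) \<Rightarrow> (real \<Rightarrow> real) \<Rightarrow> real"
  where
  "energy a b L kper \<epsilon> kbar gbar g =
     (1/2) * (LINT x:D_set b L|lebesgue. kbar * (gbar x)^2)
   + (1/2) * (LINT x:Df_set a|lebesgue. kper (x / \<epsilon>) * (g x)^2)
   + (1/2) * (LINT x:Dc_set a b|lebesgue.
                 (1/2) * kbar * (gbar x)^2 + (1/2) * kper (x / \<epsilon>) * (g x)^2)"

definition is_minimizer ::
  "real \<Rightarrow> real \<Rightarrow> real \<Rightarrow> (real \<Rightarrow> real) \<Rightarrow> real \<Rightarrow> real \<Rightarrow>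
   (real \<Rightarrow> real) \<Rightarrow> (real \<Rightarrow> real) \<Rightarrow> (real \<Rightarrow> real) \<Rightarrow> (real \<Rightarrow> real) \<Rightarrow> bool"
  where
  "is_minimizer a b L kper \<epsilon> kbar ubar gbar u g \<longleftrightarrow>
     admissible a b L ubar gbar u g \<and>
     (\<forall>ubar' gbar' u' g'. admissible a b L ubar' gbar' u' g' \<longrightarrow>
        energy a b L kper \<epsilon> kbar gbar g \<le> energy a b L kper \<epsilon> kbar gbar' g')"

definition J1D :: "real \<Rightarrow> real \<Rightarrow> real \<Rightarrow> (real \<Rightarrow> real) \<Rightarrow> real \<Rightarrow> real \<Rightarrow> real" where
  "J1D a b L kper \<epsilon> kbar =
     (SOME j. \<exists>ubar gbar u g. is_minimizer a b L kper \<epsilon> kbar ubar gbar u g \<and>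
        j = (LINT x:D_set b L|lebesgue. (gbar x - 1)^2))"

end

theory Submission
  imports Defs
begin

text \<open>
  Testing the coupling constraint with \<phi> = ubar - u itself forces ubar = u on D_c, so an
  admissible pair is a single gradient G on (-L,L) (ubar' on D, u' on D_f and D_c) whose integral
  is fixed to 2L by the boundary values, and the energy is (1/2) \<integral> c G^2 with the conductivity
  c = kbar on D, k_\<epsilon> on D_f and (kbar + k_\<epsilon>)/2 on D_c. Completing the square gives
  (1/2) \<integral> c G^2 = m L + (1/2) \<integral> c (G - m/c)^2 with m = 2L / \<integral> 1/c, and G = m/c is admissible,
  so every minimiser has ubar' = m/kbar on D. Because D_f and D_c consist of whole cells,
  \<integral> 1/c = |D|/kbar + |D_f|/k* + |D_c| <2/(kbar + k_per)>.

  Hence J_1D(kbar) = |D| (m/kbar - 1)^2 vanishes exactly when R(kbar) = |D_c \<union> D_f|, where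
  R(k) = |D_f| k/k* + |D_c| k <2/(k + k_per)> is continuous and strictly increasing from 0 to \<infinity>;
  this gives existence and uniqueness of the optimum. Finally
  k* <2/(k* + k_per)> = 1 - <(k_per - k*)^2 / (2 k_per (k_per + k*))>, which is < 1 unless k_per
  is a.e. constant, so R(k*) < |D_c \<union> D_f| and the optimum lies above k*.
\<close>

section \<open>Real analysis on intervals\<close>

lemma absolutely_integrable_on_Ioo_iff_Icc:
  fixes g :: "real \<Rightarrow> real"
  shows "g absolutely_integrable_on {p<..<q} \<longleftrightarrow> g absolutely_integrable_on {p..q}"
  using absolutely_integrable_on_open_interval[where f=g and a=p and b=q] by (simp add: box_real)

lemma bounded_measurable_absolutely_integrable:
  fixes f :: "real \<Rightarrow> real"
  assumes "f \<in> borel_measurable lebesgue" "\<And>x. x \<in> S \<Longrightarrow> \<bar>f x\<bar> \<le> B" "S \<in> lmeasurable"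
  shows "f absolutely_integrable_on S"
  unfolding set_integrable_def
proof (rule integrableI_bounded_set_indicator[where B=B])
  show "S \<in> sets lebesgue" using assms(3) by (simp add: fmeasurable_def)
  show "emeasure lebesgue S < \<infinity>" using assms(3) by (metis fmeasurableD2 infinity_ennreal_def less_top)
qed (use assms in auto)

lemma absolutely_integrable_on_subinterval:
  fixes g :: "real \<Rightarrow> real"
  assumes "g absolutely_integrable_on {p..q}" "p \<le> x" "y \<le> q"
  shows "g absolutely_integrable_on {x..y}"
  by (rule set_integrable_subset[OF assms(1)]) (use assms in auto)

lemma set_lebesgue_integral_Ioo_eq_integral:
  fixes g :: "real \<Rightarrow> real"
  assumes "g absolutely_integrable_on {p..q}"
  shows "(LINT x:{p<..<q}|lebesgue. g x) = integral {p..q} g"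
proof -
  have "g absolutely_integrable_on {p<..<q}"
    using assms absolutely_integrable_on_Ioo_iff_Icc by blast
  then show ?thesis by (simp add: set_lebesgue_integral_eq_integral(2) integral_open_interval_real)
qed

lemma integral_combine_absolutely_integrable:
  fixes g :: "real \<Rightarrow> real"
  assumes "g absolutely_integrable_on {p..q}" "p \<le> x" "x \<le> q"
  shows "integral {p..x} g + integral {x..q} g = integral {p..q} g"
  using Henstock_Kurzweil_Integration.integral_combine[of p x q g]
    set_lebesgue_integral_eq_integral(1)[OF assms(1)] assms(2,3) by simp

lemma set_integral_Ioo_Un:
  fixes f :: "real \<Rightarrow> real"
  assumes "f absolutely_integrable_on {p..q}" "f absolutely_integrable_on {r..s}" "q \<le> r"
  shows "(LINT x:{p<..<q} \<union> {r<..<s}|lebesgue. f x) = integral {p..q} f + integral {r..s} f"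
    "set_integrable lebesgue ({p<..<q} \<union> {r<..<s}) f"
proof -
  have Ioo: "set_integrable lebesgue {p<..<q} f" "set_integrable lebesgue {r<..<s} f"
    using assms(1,2) absolutely_integrable_on_Ioo_iff_Icc by blast+
  have "(LINT x:{p<..<q} \<union> {r<..<s}|lebesgue. f x)
      = (LINT x:{p<..<q}|lebesgue. f x) + (LINT x:{r<..<s}|lebesgue. f x)"
    by (rule set_integral_Un) (use Ioo assms(3) in auto)
  then show "(LINT x:{p<..<q} \<union> {r<..<s}|lebesgue. f x) = integral {p..q} f + integral {r..s} f"
    using set_lebesgue_integral_Ioo_eq_integral[OF assms(1)]
      set_lebesgue_integral_Ioo_eq_integral[OF assms(2)] by simp
  show "set_integrable lebesgue ({p<..<q} \<union> {r<..<s}) f" using Ioo by (rule set_integrable_Un) auto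
qed

lemma absolutely_integrable_square_diff:
  fixes f g :: "real \<Rightarrow> real"
  assumes "f absolutely_integrable_on S" "g absolutely_integrable_on S" "S \<in> sets lebesgue"
    "(\<lambda>x. (f x)^2) absolutely_integrable_on S" "(\<lambda>x. (g x)^2) absolutely_integrable_on S"
  shows "(\<lambda>x. (f x - g x)^2) absolutely_integrable_on S"
proof (rule measurable_bounded_by_integrable_imp_absolutely_integrable)
  have "(\<lambda>x. f x - g x) absolutely_integrable_on S" using assms(1,2) by (rule set_integral_diff(1))
  then have "(\<lambda>x. f x - g x) \<in> borel_measurable (lebesgue_on S)"
    using absolutely_integrable_measurable[OF assms(3)] by blast
  then show "(\<lambda>x. (f x - g x)^2) \<in> borel_measurable (lebesgue_on S)" by (rule borel_measurable_power)
  have "(\<lambda>x. 2 * (f x)^2 + 2 * (g x)^2) absolutely_integrable_on S"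
    using assms(4,5) by (intro set_integral_add(1) set_integrable_mult_right)
  then show "(\<lambda>x. 2 * (f x)^2 + 2 * (g x)^2) integrable_on S"
    by (rule set_lebesgue_integral_eq_integral(1))
  show "norm ((f x - g x)^2) \<le> 2 * (f x)^2 + 2 * (g x)^2" for x
  proof -
    have "(f x - g x)^2 + (f x + g x)^2 = 2 * (f x)^2 + 2 * (g x)^2"
      by (simp add: power2_eq_square algebra_simps)
    then have "(f x - g x)^2 \<le> 2 * (f x)^2 + 2 * (g x)^2"
      using zero_le_power2[of "f x + g x"] by linarith
    then show ?thesis by simp
  qed
qed (rule assms(3))

lemma bounded_measurable_mult_absolutely_integrable:
  fixes f g :: "real \<Rightarrow> real"
  assumes f: "f \<in> borel_measurable lebesgue" "\<And>x. \<bar>f x\<bar> \<le> B"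
    and S: "S \<in> sets lebesgue" and g: "g absolutely_integrable_on S"
  shows "(\<lambda>x. f x * g x) absolutely_integrable_on S"
proof (rule absolutely_integrable_bounded_measurable_product_real[OF _ S _ g])
  show "f \<in> borel_measurable (lebesgue_on S)" using f(1) by (rule measurable_restrict_space1)
  show "bounded (f ` S)" unfolding bounded_iff using f(2) by auto
qed

lemma set_integral_const_lmeasurable:
  fixes c :: real
  assumes "S \<in> lmeasurable"
  shows "(LINT x:S|lebesgue. c) = measure lebesgue S * c"
proof (subst set_integral_const)
  show "S \<in> sets lebesgue" using assms by (simp add: fmeasurable_def)
  show "emeasure lebesgue S \<noteq> \<infinity>" using assms by (metis fmeasurableD2 infinity_ennreal_def)
qed simp

lemma set_integral_nonneg:
  fixes f :: "'a \<Rightarrow> real"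
  assumes "\<And>x. x \<in> A \<Longrightarrow> 0 \<le> f x"
  shows "0 \<le> (LINT x:A|M. f x)"
  unfolding set_lebesgue_integral_def
  by (rule Bochner_Integration.integral_nonneg) (use assms in \<open>auto simp: indicator_def\<close>)

lemma set_integral_nonneg_eq_0_AE:
  fixes F :: "real \<Rightarrow> real"
  assumes "set_integrable lebesgue A F" "\<And>x. 0 \<le> F x" "(LINT x:A|lebesgue. F x) = 0"
  shows "AE x in lebesgue. x \<in> A \<longrightarrow> F x = 0"
proof -
  have "AE x in lebesgue. indicator A x *\<^sub>R F x = 0"
    using integral_nonneg_eq_0_iff_AE[of lebesgue "\<lambda>x. indicator A x *\<^sub>R F x"] assms
    unfolding set_integrable_def set_lebesgue_integral_def by (auto simp: indicator_def)
  then show ?thesis by eventually_elim (auto simp: indicator_def)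
qed

lemma set_integral_cong_AE_integrable:
  fixes f g :: "real \<Rightarrow> real"
  assumes "set_integrable lebesgue X f" "set_integrable lebesgue X g"
    and "AE x in lebesgue. x \<in> X \<longrightarrow> f x = g x"
  shows "(LINT x:X|lebesgue. f x) = (LINT x:X|lebesgue. g x)"
  unfolding set_lebesgue_integral_def
proof (rule integral_cong_AE)
  show "(\<lambda>x. indicator X x *\<^sub>R f x) \<in> borel_measurable lebesgue"
    using assms(1) unfolding set_integrable_def by (rule borel_measurable_integrable)
  show "(\<lambda>x. indicator X x *\<^sub>R g x) \<in> borel_measurable lebesgue"
    using assms(2) unfolding set_integrable_def by (rule borel_measurable_integrable)
  show "AE x in lebesgue. indicator X x *\<^sub>R f x = indicator X x *\<^sub>R g x"
    using assms(3) by eventually_elim (simp add: indicator_def)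
qed

lemma set_integral_complete_square:
  fixes c y :: "real \<Rightarrow> real"
  assumes "set_integrable lebesgue X (\<lambda>x. c x * (y x)^2)" "set_integrable lebesgue X y"
    and "set_integrable lebesgue X (\<lambda>x. 1 / c x)" and pos: "\<And>x. x \<in> X \<Longrightarrow> c x > 0"
    and X: "X \<in> sets lebesgue"
  shows "(LINT x:X|lebesgue. c x * (y x - m / c x)^2)
      = (LINT x:X|lebesgue. c x * (y x)^2) - 2 * m * (LINT x:X|lebesgue. y x)
        + m^2 * (LINT x:X|lebesgue. 1 / c x)"
    "set_integrable lebesgue X (\<lambda>x. c x * (y x - m / c x)^2)"
proof -
  have pt: "c x * (y x - m / c x)^2 = (c x * (y x)^2 - (2 * m) * y x) + m^2 * (1 / c x)"
    if "x \<in> X" for x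
    using pos[OF that] by (simp add: power2_eq_square field_simps)
  have i1: "set_integrable lebesgue X (\<lambda>x. (2 * m) * y x)"
    using assms(2) by (rule set_integrable_mult_right)
  have i2: "set_integrable lebesgue X (\<lambda>x. m^2 * (1 / c x))"
    using assms(3) by (rule set_integrable_mult_right)
  have i3: "set_integrable lebesgue X (\<lambda>x. c x * (y x)^2 - (2 * m) * y x)"
    using assms(1) i1 by (rule set_integral_diff(1))
  have "(LINT x:X|lebesgue. c x * (y x - m / c x)^2)
      = (LINT x:X|lebesgue. (c x * (y x)^2 - (2 * m) * y x) + m^2 * (1 / c x))"
    using X pt by (intro set_lebesgue_integral_cong) auto
  also have "\<dots> = (LINT x:X|lebesgue. c x * (y x)^2 - (2 * m) * y x)
      + (LINT x:X|lebesgue. m^2 * (1 / c x))"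
    by (rule set_integral_add(2)[OF i3 i2])
  also have "\<dots> = (LINT x:X|lebesgue. c x * (y x)^2) - 2 * m * (LINT x:X|lebesgue. y x)
        + m^2 * (LINT x:X|lebesgue. 1 / c x)"
    by (simp only: set_integral_diff(2)[OF assms(1) i1] set_integral_mult_right)
  finally show "(LINT x:X|lebesgue. c x * (y x - m / c x)^2)
      = (LINT x:X|lebesgue. c x * (y x)^2) - 2 * m * (LINT x:X|lebesgue. y x)
        + m^2 * (LINT x:X|lebesgue. 1 / c x)" .
  show "set_integrable lebesgue X (\<lambda>x. c x * (y x - m / c x)^2)"
    by (rule set_integrable_cong[THEN iffD2, OF refl refl _ set_integral_add(1)[OF i3 i2]])
      (rule pt)
qed

lemma exists_root_between_linear_bounds:
  fixes f :: "real \<Rightarrow> real"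
  assumes cont: "continuous_on {0<..} f" and c: "0 < c" "c \<le> M"
    and lower: "\<And>k. 0 < k \<Longrightarrow> c * k \<le> f k" and upper: "\<And>k. 0 < k \<Longrightarrow> f k \<le> M * k"
    and y: "0 < y"
  shows "\<exists>k>0. f k = y"
proof -
  have k1: "0 < y / M" and k12: "y / M \<le> y / c" using c y by (auto intro: frac_le)
  have "f (y / M) \<le> y" using upper[OF k1] c by simp
  moreover have "y \<le> f (y / c)" using lower[of "y / c"] c y by simp
  moreover have "continuous_on {y / M..y / c} f" by (rule continuous_on_subset[OF cont]) (use k1 in auto)
  ultimately obtain k where "y / M \<le> k" "f k = y"
    using IVT'[of f "y / M" y "y / c"] k12 by blast
  then show ?thesis using k1 by (intro exI[of _ k]) auto
qed

section \<open>One-dimensional H^1 functions\<close>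

lemma H1_on_increment:
  assumes "H1_on p q u g" "p \<le> x" "x \<le> y" "y \<le> q"
  shows "u y - u x = integral {x..y} g"
proof -
  have g: "g absolutely_integrable_on {p..q}"
    and rep: "\<forall>x\<in>{p..q}. u x = u p + (LINT t:{p..x}|lebesgue. g t)"
    using assms(1) unfolding H1_on_def absolutely_integrable_on_Ioo_iff_Icc by blast+
  have at: "u z = u p + integral {p..z} g" if "p \<le> z" "z \<le> q" for z
  proof -
    have "u z = u p + (LINT t:{p..z}|lebesgue. g t)" by (rule bspec[OF rep]) (use that in auto)
    then show ?thesis
      by (simp only: set_lebesgue_integral_eq_integral(2)[OF absolutely_integrable_on_subinterval[OF g order.refl that(2)]])
  qed
  have "integral {p..x} g + integral {x..y} g = integral {p..y} g"
    by (rule integral_combine_absolutely_integrable[OF absolutely_integrable_on_subinterval[OF g]])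
      (use assms in auto)
  moreover have "u x = u p + integral {p..x} g" "u y = u p + integral {p..y} g"
    by (rule at; use assms in linarith)+
  ultimately show ?thesis by linarith
qed

lemma H1_on_absolutely_integrable:
  assumes "H1_on p q u g" "p \<le> x" "y \<le> q"
  shows "g absolutely_integrable_on {x..y}" "(\<lambda>t. (g t)^2) absolutely_integrable_on {x..y}"
proof -
  have "g absolutely_integrable_on {p..q}" "(\<lambda>t. (g t)^2) absolutely_integrable_on {p..q}"
    using assms(1) unfolding H1_on_def absolutely_integrable_on_Ioo_iff_Icc by blast+
  then show "g absolutely_integrable_on {x..y}" "(\<lambda>t. (g t)^2) absolutely_integrable_on {x..y}"
    using absolutely_integrable_on_subinterval assms(2,3) by blast+
qed

lemma H1_on_integral:
  fixes f :: "real \<Rightarrow> real"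
  assumes f: "f absolutely_integrable_on {p0..q}" and f2: "(\<lambda>t. (f t)^2) absolutely_integrable_on {p0..q}"
    and "p0 \<le> p" "p \<le> q"
  shows "H1_on p q (\<lambda>x. c + integral {p0..x} f) f"
  unfolding H1_on_def
proof (intro conjI ballI)
  show "set_integrable lebesgue {p<..<q} f" "set_integrable lebesgue {p<..<q} (\<lambda>x. (f x)^2)"
    unfolding absolutely_integrable_on_Ioo_iff_Icc
    by (rule absolutely_integrable_on_subinterval[OF f assms(3) order.refl],
        rule absolutely_integrable_on_subinterval[OF f2 assms(3) order.refl])
  fix x assume x: "x \<in> {p..q}"
  have "integral {p0..p} f + integral {p..x} f = integral {p0..x} f"
    by (rule integral_combine_absolutely_integrable[OF absolutely_integrable_on_subinterval[OF f]])
      (use x assms in auto)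
  moreover have "(LINT t:{p..x}|lebesgue. f t) = integral {p..x} f"
    by (rule set_lebesgue_integral_eq_integral(2)[OF absolutely_integrable_on_subinterval[OF f]])
      (use x assms in auto)
  ultimately show "c + integral {p0..x} f = c + integral {p0..p} f + (LINT t:{p..x}|lebesgue. f t)"
    by simp
qed

lemma H1_on_subinterval:
  assumes "H1_on p q u g" "p \<le> p'" "p' \<le> q'" "q' \<le> q"
  shows "H1_on p' q' u g"
  unfolding H1_on_def
proof (intro conjI ballI)
  show "set_integrable lebesgue {p'<..<q'} g" "set_integrable lebesgue {p'<..<q'} (\<lambda>x. (g x)^2)"
    unfolding absolutely_integrable_on_Ioo_iff_Icc by (rule H1_on_absolutely_integrable[OF assms(1,2,4)])+
  fix x assume x: "x \<in> {p'..q'}"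
  then have "g absolutely_integrable_on {p'..x}"
    using H1_on_absolutely_integrable(1)[OF assms(1)] assms by auto
  then have "(LINT t:{p'..x}|lebesgue. g t) = integral {p'..x} g"
    by (rule set_lebesgue_integral_eq_integral(2))
  then show "u x = u p' + (LINT t:{p'..x}|lebesgue. g t)"
    using H1_on_increment[OF assms(1), of p' x] x assms by simp
qed

lemma H1_on_diff:
  assumes u: "H1_on p q u g" and v: "H1_on p q v h"
  shows "H1_on p q (\<lambda>x. u x - v x) (\<lambda>x. g x - h x)"
  unfolding H1_on_def
proof (intro conjI ballI)
  have g: "set_integrable lebesgue {p<..<q} g" "set_integrable lebesgue {p<..<q} (\<lambda>x. (g x)^2)"
    and h: "set_integrable lebesgue {p<..<q} h" "set_integrable lebesgue {p<..<q} (\<lambda>x. (h x)^2)"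
    using u v unfolding H1_on_def by blast+
  show "set_integrable lebesgue {p<..<q} (\<lambda>x. g x - h x)" using g(1) h(1) by (rule set_integral_diff(1))
  show "set_integrable lebesgue {p<..<q} (\<lambda>x. (g x - h x)^2)"
    by (rule absolutely_integrable_square_diff[OF g(1) h(1) _ g(2) h(2)]) simp
  fix x assume x: "x \<in> {p..q}"
  have "g absolutely_integrable_on {p..x}" "h absolutely_integrable_on {p..x}"
    using H1_on_absolutely_integrable(1)[OF u] H1_on_absolutely_integrable(1)[OF v] x by auto
  then have "(LINT t:{p..x}|lebesgue. g t - h t) = (LINT t:{p..x}|lebesgue. g t) - (LINT t:{p..x}|lebesgue. h t)"
    by (rule set_integral_diff(2))
  moreover have "u x = u p + (LINT t:{p..x}|lebesgue. g t)" "v x = v p + (LINT t:{p..x}|lebesgue. h t)"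
    using u v x unfolding H1_on_def by blast+
  ultimately show "u x - v x = u p - v p + (LINT t:{p..x}|lebesgue. g t - h t)" by linarith
qed

lemma H1_on_continuous:
  assumes "H1_on p q u g"
  shows "continuous_on {p..q} u"
proof -
  have "continuous_on {p..q} (\<lambda>x. u p + integral {p..x} g)"
    using H1_on_absolutely_integrable(1)[OF assms order.refl order.refl]
    by (intro continuous_intros indefinite_integral_continuous_1 set_lebesgue_integral_eq_integral(1))
  moreover have "u p + integral {p..x} g = u x" if "x \<in> {p..q}" for x
    using H1_on_increment[OF assms, of p x] that by auto
  ultimately show ?thesis by (rule continuous_on_eq)
qed

lemma H1_on_square_absolutely_integrable:
  assumes "H1_on p q u g"
  shows "(\<lambda>x. (u x)^2) absolutely_integrable_on {p..q}"
  by (intro absolutely_integrable_continuous_real continuous_on_power H1_on_continuous[OF assms])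

lemma H1_on_eq_0_if_AE:
  assumes H1: "H1_on p q \<phi> \<psi>" and "p < q"
    and ae: "AE x in lebesgue. x \<in> {p<..<q} \<longrightarrow> \<psi> x = 0 \<and> \<phi> x = 0"
    and x: "x \<in> {p..q}"
  shows "\<phi> x = 0"
proof -
  have const: "\<phi> y = \<phi> p" if "y \<in> {p..q}" for y
  proof -
    have "AE t in lebesgue. indicator {p<..<y} t *\<^sub>R \<psi> t = 0"
      using ae by eventually_elim (use that in \<open>auto simp: indicator_def\<close>)
    then have "(LINT t:{p<..<y}|lebesgue. \<psi> t) = 0"
      unfolding set_lebesgue_integral_def by (rule integral_eq_zero_AE)
    moreover have "(LINT t:{p<..<y}|lebesgue. \<psi> t) = integral {p..y} \<psi>"
      by (rule set_lebesgue_integral_Ioo_eq_integral[OF H1_on_absolutely_integrable(1)[OF H1]])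
        (use that in auto)
    moreover have "\<phi> y - \<phi> p = integral {p..y} \<psi>"
      by (rule H1_on_increment[OF H1]) (use that in auto)
    ultimately show ?thesis by linarith
  qed
  have "\<phi> p = 0"
  proof (rule ccontr)
    assume "\<phi> p \<noteq> 0"
    then have "\<phi> y \<noteq> 0" if "y \<in> {p<..<q}" for y
      using const[of y] that by simp
    with ae have "AE x in lebesgue. x \<notin> {p<..<q}" by (auto elim: eventually_mono)
    then have "{p<..<q} \<in> null_sets lebesgue" by (simp add: AE_iff_null_sets)
    then have "measure lebesgue {p<..<q} = 0" by (simp add: measure_def null_setsD1)
    then show False using \<open>p < q\<close> by simp
  qed
  then show ?thesis using const[OF x] by linarith
qed

section \<open>Periodic coefficients\<close>

lemma periodic_add_int:
  assumes per: "\<forall>x. f (x + 1) = f x"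
  shows "f (x + real_of_int k) = f x"
proof -
  have nat: "f (y + real n) = f y" for y n
  proof (induction n)
    case (Suc n)
    have "f (y + real (Suc n)) = f ((y + real n) + 1)" by (simp add: algebra_simps)
    then show ?case using per Suc by simp
  qed simp
  show ?thesis
  proof (cases "k \<ge> 0")
    case True
    then show ?thesis using nat[of x "nat k"] by simp
  next
    case False
    then show ?thesis using nat[of "x + real_of_int k" "nat (-k)"] by simp
  qed
qed

lemma integral_periodic_unit_interval:
  fixes f :: "real \<Rightarrow> real"
  assumes per: "\<forall>x. f (x + 1) = f x" and ai: "\<And>p q. f absolutely_integrable_on {p..q}"
  shows "integral {s..s+1} f = integral {0..1} f"
proof -
  define k where "k = floor s"
  define r where "r = s - k"
  have r: "0 \<le> r" "r < 1" unfolding r_def k_def by linarith+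
  have shift: "(\<lambda>x. f (x + real_of_int j)) = f" for j
    using periodic_add_int[OF per] by auto
  have "integral {s..s+1} f = integral {s..k+1} f + integral {k+1..s+1} f"
    using integral_combine_absolutely_integrable[OF ai, of s "k+1" "s+1"] r unfolding r_def by auto
  also have "integral {s..k+1} f = integral {r..1} f"
    using integral_shift_real_ivl[of s k "k+1" f] shift[of k] unfolding r_def by simp
  also have "integral {k+1..s+1} f = integral {0..r} f"
    using integral_shift_real_ivl[of "k+1" "k+1" "s+1" f] shift[of "k+1"] unfolding r_def
    by (simp add: algebra_simps)
  also have "integral {r..1} f + integral {0..r} f = integral {0..1} f"
    using integral_combine_absolutely_integrable[OF ai, of 0 r 1] r by simp
  finally show ?thesis .
qed

lemma integral_periodic_periods:
  fixes f :: "real \<Rightarrow> real"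
  assumes per: "\<forall>x. f (x + 1) = f x" and ai: "\<And>p q. f absolutely_integrable_on {p..q}"
  shows "integral {s..s + real n} f = real n * integral {0..1} f"
proof (induction n)
  case (Suc n)
  have e: "s + real (Suc n) = s + real n + 1" by simp
  have "integral {s..s + real (Suc n)} f
      = integral {s..s + real n} f + integral {s + real n..s + real n + 1} f"
    unfolding e using integral_combine_absolutely_integrable[OF ai, of s "s + real n" "s + real n + 1"] by simp
  then show ?case
    using Suc integral_periodic_unit_interval[OF per ai, of "s + real n"] by (simp add: algebra_simps)
qed simp

lemma integral_periodic_rescaled:
  fixes f :: "real \<Rightarrow> real"
  assumes per: "\<forall>x. f (x + 1) = f x" and ai: "\<And>p q. f absolutely_integrable_on {p..q}"
    and e: "\<epsilon> > 0"
  shows "integral {p..p + real n * \<epsilon>} (\<lambda>x. f (x / \<epsilon>)) = real n * \<epsilon> * integral {0..1} f"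
proof -
  have "integral ((\<lambda>x. x / (1/\<epsilon>)) ` {p/\<epsilon>..p/\<epsilon> + real n}) (\<lambda>x. f ((1/\<epsilon>) * x))
        = (1 / \<bar>1/\<epsilon>\<bar>) *\<^sub>R integral {p/\<epsilon>..p/\<epsilon> + real n} f"
    by (rule integral_stretch_real) (use e in auto)
  moreover have "(\<lambda>x. x / (1/\<epsilon>)) ` {p/\<epsilon>..p/\<epsilon> + real n} = {p..p + real n * \<epsilon>}"
  proof -
    have "(\<lambda>x. x / (1/\<epsilon>)) = (*) \<epsilon>" by (auto simp: fun_eq_iff)
    moreover have "\<epsilon> * (p/\<epsilon>) = p" "\<epsilon> * (p/\<epsilon> + real n) = p + real n * \<epsilon>"
      using e by (auto simp: field_simps)
    ultimately show ?thesis by (simp only: image_mult_atLeastAtMost[OF e])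
  qed
  ultimately show ?thesis using integral_periodic_periods[OF per ai, of "p/\<epsilon>" n] e by simp
qed

lemma set_integral_periodic_rescaled:
  fixes f :: "real \<Rightarrow> real"
  assumes per: "\<forall>x. f (x + 1) = f x" and meas: "f \<in> borel_measurable lebesgue"
    and bnd: "\<And>x. \<bar>f x\<bar> \<le> B" and e: "\<epsilon> > 0" and q: "q = p + real n * \<epsilon>"
  shows "(LINT x:{p<..<q}|lebesgue. f (x / \<epsilon>)) = (q - p) * cell_avg f"
proof -
  have ai: "\<And>p q. f absolutely_integrable_on {p..q}"
    by (rule bounded_measurable_absolutely_integrable[OF meas bnd]) auto
  have "(\<lambda>x. f (x / \<epsilon>)) \<in> borel_measurable lebesgue"
    using borel_measurable_affine[OF meas, of "1/\<epsilon>" 0] e by (simp add: divide_inverse mult.commute)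
  then have "(\<lambda>x. f (x / \<epsilon>)) absolutely_integrable_on {p..q}"
    by (rule bounded_measurable_absolutely_integrable[OF _ bnd]) auto
  then have "(LINT x:{p<..<q}|lebesgue. f (x / \<epsilon>)) = integral {p..q} (\<lambda>x. f (x / \<epsilon>))"
    by (rule set_lebesgue_integral_Ioo_eq_integral)
  also have "\<dots> = (q - p) * integral {0..1} f" using integral_periodic_rescaled[OF per ai e, of p n] q by simp
  also have "integral {0..1} f = cell_avg f"
    unfolding cell_avg_def using set_lebesgue_integral_eq_integral(2)[OF ai] by simp
  finally show ?thesis .
qed

lemma AE_periodic_of_AE_cell:
  fixes f :: "real \<Rightarrow> 'a"
  assumes per: "\<forall>x. f (x + 1) = f x" and ae: "AE y in lebesgue. y \<in> {0..1} \<longrightarrow> f y = c"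
  shows "AE y in lebesgue. f y = c"
proof -
  from ae obtain N where N: "{y \<in> space lebesgue. \<not> (y \<in> {0..1} \<longrightarrow> f y = c)} \<subseteq> N"
    "emeasure lebesgue N = 0" "N \<in> sets lebesgue" by (rule AE_E)
  define Nk where "Nk k = (\<lambda>x. x + real_of_int k) ` N" for k :: int
  have "Nk k \<in> null_sets lebesgue" for k
  proof -
    have "(\<lambda>x. x + real_of_int k) = (\<lambda>x. real_of_int k + x)" by (auto simp: fun_eq_iff)
    then have "Nk k \<in> sets lebesgue"
      unfolding Nk_def by (simp only:) (rule lebesgue_sets_translation[OF N(3)])
    moreover have "emeasure lebesgue (Nk k) = 0"
      using emeasure_lebesgue_affine[of 1 "real_of_int k" N] N(2) unfolding Nk_def by simp
    ultimately show ?thesis by (simp add: null_sets_def)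
  qed
  then have "(\<Union>k. Nk k) \<in> null_sets lebesgue" by (rule null_sets_UN)
  then show ?thesis
  proof (rule AE_I')
    show "{y \<in> space lebesgue. f y \<noteq> c} \<subseteq> (\<Union>k. Nk k)"
    proof
      fix y assume y: "y \<in> {y \<in> space lebesgue. f y \<noteq> c}"
      define z where "z = y - real_of_int (floor y)"
      have z: "0 \<le> z" "z \<le> 1" unfolding z_def by linarith+
      have "f z = f y" using periodic_add_int[OF per, of z "floor y"] unfolding z_def by simp
      then have "z \<in> N" using y z N(1) by auto
      then show "y \<in> (\<Union>k. Nk k)" unfolding Nk_def z_def by force
    qed
  qed
qed

lemma cell_avg_eq_integral:
  "f absolutely_integrable_on {0..1} \<Longrightarrow> cell_avg f = integral {0..1} f"
  unfolding cell_avg_def by (rule set_lebesgue_integral_eq_integral(2))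

lemma inverse_kstar: "1 / kstar kper = cell_avg (\<lambda>y. inverse (kper y))"
  unfolding kstar_def by (simp add: inverse_eq_divide)

locale bounded_coefficient =
  fixes kper :: "real \<Rightarrow> real" and \<alpha> \<beta> :: real
  assumes kper_measurable: "kper \<in> borel_measurable lebesgue"
    and alpha_pos: "0 < \<alpha>" and kper_bounds: "\<forall>x. \<alpha> \<le> kper x \<and> kper x \<le> \<beta>"
begin

abbreviation coupling_avg :: "real \<Rightarrow> real" where
  "coupling_avg k \<equiv> cell_avg (\<lambda>y. 2 / (k + kper y))"

lemma kper_ge: "\<alpha> \<le> kper x" and kper_le: "kper x \<le> \<beta>" and kper_pos: "0 < kper x"
  using kper_bounds alpha_pos by (auto intro: less_le_trans)

lemma coupling_pos: "0 < k \<Longrightarrow> 0 < 2 / (k + kper y)"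
  using kper_pos[of y] by simp

lemma coupling_le: "0 < k \<Longrightarrow> 2 / (k + kper y) \<le> 2 / \<alpha>"
  using kper_ge[of y] alpha_pos by (simp add: frac_le)

lemma inverse_kper_absolutely_integrable: "(\<lambda>y. inverse (kper y)) absolutely_integrable_on {p..q}"
proof (rule bounded_measurable_absolutely_integrable)
  show "(\<lambda>y. inverse (kper y)) \<in> borel_measurable lebesgue"
    using kper_measurable by (rule borel_measurable_inverse)
  show "\<bar>inverse (kper x)\<bar> \<le> 1 / \<alpha>" for x
    using kper_pos[of x] kper_ge[of x] alpha_pos by (simp add: inverse_eq_divide frac_le)
qed simp

lemma coupling_absolutely_integrable:
  assumes "k > 0"
  shows "(\<lambda>y. 2 / (k + kper y)) absolutely_integrable_on {p..q}"
proof (rule bounded_measurable_absolutely_integrable)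
  show "(\<lambda>y. 2 / (k + kper y)) \<in> borel_measurable lebesgue"
    using kper_measurable by measurable
  show "\<bar>2 / (k + kper x)\<bar> \<le> 2 / \<alpha>" for x
    using coupling_pos[OF assms] coupling_le[OF assms] by (simp add: less_imp_le)
qed simp

lemma cell_avg_inverse_pos: "0 < cell_avg (\<lambda>y. inverse (kper y))"
proof -
  have "0 < 1 / \<beta>" using kper_pos[of 0] kper_le[of 0] by simp
  also have "1 / \<beta> = integral {0..1} (\<lambda>y::real. 1 / \<beta>)" by simp
  also have "\<dots> \<le> integral {0..1} (\<lambda>y. inverse (kper y))"
    by (intro Henstock_Kurzweil_Integration.integral_le integrable_on_const
        set_lebesgue_integral_eq_integral(1)[OF inverse_kper_absolutely_integrable])
      (use kper_pos kper_le in \<open>auto simp: inverse_eq_divide frac_le\<close>)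
  finally show ?thesis
    by (simp add: cell_avg_eq_integral[OF inverse_kper_absolutely_integrable])
qed

lemma kstar_pos: "0 < kstar kper"
  using cell_avg_inverse_pos unfolding kstar_def by simp

lemma coupling_avg_bounds:
  assumes k: "k > 0"
  shows "0 \<le> coupling_avg k" "coupling_avg k \<le> 2 / \<alpha>"
proof -
  have A: "coupling_avg k = integral {0..1} (\<lambda>y. 2 / (k + kper y))"
    by (rule cell_avg_eq_integral[OF coupling_absolutely_integrable[OF k]])
  have int: "(\<lambda>y. 2 / (k + kper y)) integrable_on {0..1}"
    by (rule set_lebesgue_integral_eq_integral(1)[OF coupling_absolutely_integrable[OF k]])
  show "0 \<le> coupling_avg k"
    unfolding A by (rule Henstock_Kurzweil_Integration.integral_nonneg[OF int])
      (use coupling_pos[OF k] in \<open>simp add: less_imp_le\<close>)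
  have "integral {0..1} (\<lambda>y. 2 / (k + kper y)) \<le> integral {0..1} (\<lambda>y::real. 2 / \<alpha>)"
    by (intro Henstock_Kurzweil_Integration.integral_le[OF int] integrable_on_const coupling_le[OF k])
      simp
  then show "coupling_avg k \<le> 2 / \<alpha>" using A by simp
qed

lemma mult_coupling_avg_mono:
  assumes k: "0 < k" "k \<le> k'"
  shows "k * coupling_avg k \<le> k' * coupling_avg k'"
proof -
  have k': "0 < k'" using k by linarith
  have "k * coupling_avg k = integral {0..1} (\<lambda>y. k * (2 / (k + kper y)))"
    unfolding cell_avg_eq_integral[OF coupling_absolutely_integrable[OF k(1)]]
    by (rule Henstock_Kurzweil_Integration.integral_mult_right[symmetric])
  also have "\<dots> \<le> integral {0..1} (\<lambda>y. k' * (2 / (k' + kper y)))"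
  proof (rule Henstock_Kurzweil_Integration.integral_le)
    have "(\<lambda>y. c * (2 / (c + kper y))) integrable_on {0..1}" if "0 < c" for c
      by (intro set_lebesgue_integral_eq_integral(1) set_integrable_mult_right
          coupling_absolutely_integrable that)
    then show "(\<lambda>y. k * (2 / (k + kper y))) integrable_on {0..1}"
      "(\<lambda>y. k' * (2 / (k' + kper y))) integrable_on {0..1}" using k k' by blast+
    show "k * (2 / (k + kper y)) \<le> k' * (2 / (k' + kper y))" for y
    proof -
      have "k * 2 * (k' + kper y) \<le> k' * 2 * (k + kper y)"
        using k kper_pos[of y] by (simp add: algebra_simps mult_right_mono)
      then show ?thesis using k k' kper_pos[of y] by (simp add: field_simps)
    qed
  qed
  also have "\<dots> = k' * coupling_avg k'"
    unfolding cell_avg_eq_integral[OF coupling_absolutely_integrable[OF k']]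
    by (rule Henstock_Kurzweil_Integration.integral_mult_right)
  finally show ?thesis .
qed

lemma coupling_avg_lipschitz:
  assumes k: "0 < k" "0 < k'"
  shows "\<bar>coupling_avg k - coupling_avg k'\<bar> \<le> 2 * \<bar>k - k'\<bar> / \<alpha>^2"
proof -
  define c where "c = 2 * \<bar>k - k'\<bar> / \<alpha>^2"
  have pt: "\<bar>2 / (k + kper y) - 2 / (k' + kper y)\<bar> \<le> c" for y
  proof -
    have q: "k + kper y \<ge> \<alpha>" "k' + kper y \<ge> \<alpha>" using kper_ge[of y] k by linarith+
    have "2 / (k + kper y) - 2 / (k' + kper y) = 2 * (k' - k) / ((k + kper y) * (k' + kper y))"
      using q alpha_pos by (simp add: field_simps)
    moreover have "\<bar>2 * (k' - k)\<bar> = 2 * \<bar>k - k'\<bar>" by (cases "k \<le> k'") auto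
    moreover have "\<bar>(k + kper y) * (k' + kper y)\<bar> = (k + kper y) * (k' + kper y)"
      using q alpha_pos by simp
    ultimately have "\<bar>2 / (k + kper y) - 2 / (k' + kper y)\<bar> = 2 * \<bar>k - k'\<bar> / ((k + kper y) * (k' + kper y))"
      by (simp only: abs_divide)
    also have "\<dots> \<le> 2 * \<bar>k - k'\<bar> / (\<alpha> * \<alpha>)"
      by (intro divide_left_mono mult_mono mult_pos_pos) (use q alpha_pos in auto)
    finally show ?thesis unfolding c_def by (simp add: power2_eq_square)
  qed
  have i: "(\<lambda>y. 2 / (k + kper y)) integrable_on {0..1}" "(\<lambda>y. 2 / (k' + kper y)) integrable_on {0..1}"
    using set_lebesgue_integral_eq_integral(1)[OF coupling_absolutely_integrable] k by blast+
  have "norm (integral {0..1} (\<lambda>y. 2 / (k + kper y) - 2 / (k' + kper y))) \<le> integral {0..1} (\<lambda>y::real. c)"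
    by (rule integral_norm_bound_integral[OF Henstock_Kurzweil_Integration.integrable_diff[OF i]])
      (auto intro: integrable_on_const simp: pt)
  then show ?thesis
    using Henstock_Kurzweil_Integration.integral_diff[OF i]
    by (simp add: c_def cell_avg_eq_integral[OF coupling_absolutely_integrable] k)
qed

lemma continuous_on_coupling_avg: "continuous_on {0<..} coupling_avg"
  unfolding continuous_on_iff
proof (intro ballI allI impI)
  fix x e :: real assume x: "x \<in> {0<..}" and e: "e > 0"
  show "\<exists>d>0. \<forall>x'\<in>{0<..}. dist x' x < d \<longrightarrow> dist (coupling_avg x') (coupling_avg x) < e"
  proof (intro exI conjI ballI impI)
    show "e * \<alpha>^2 / 2 > 0" using e alpha_pos by simp
    fix x' assume x': "x' \<in> {0<..}" and d: "dist x' x < e * \<alpha>^2 / 2"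
    have "\<bar>coupling_avg x' - coupling_avg x\<bar> \<le> 2 * \<bar>x' - x\<bar> / \<alpha>^2"
      by (rule coupling_avg_lipschitz) (use x x' in auto)
    also have "\<dots> < e" using d alpha_pos by (simp add: dist_real_def divide_less_eq mult.commute)
    finally show "dist (coupling_avg x') (coupling_avg x) < e" by (simp add: dist_real_def)
  qed
qed

definition mismatch :: "real \<Rightarrow> real \<Rightarrow> real" where
  "mismatch \<kappa> y = (kper y - \<kappa>)^2 / (2 * kper y * (kper y + \<kappa>))"

lemma mismatch_nonneg: "0 < \<kappa> \<Longrightarrow> 0 \<le> mismatch \<kappa> y"
  unfolding mismatch_def using kper_pos[of y] by simp

text \<open>The pointwise identity 2\<kappa>/(\<kappa>+k) = 1/2 + \<kappa>/(2k) - mismatch \<kappa>, averaged over the cell.\<close>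

lemma coupling_avg_eq_mismatch:
  assumes \<kappa>: "0 < \<kappa>"
  shows "\<kappa> * coupling_avg \<kappa> = 1/2 + \<kappa> / 2 * cell_avg (\<lambda>y. inverse (kper y)) - cell_avg (mismatch \<kappa>)"
    "mismatch \<kappa> absolutely_integrable_on {0..1}"
proof -
  define F1 where "F1 y = \<kappa> * (2 / (\<kappa> + kper y))" for y
  define F2 where "F2 y = (1/2) + \<kappa> / 2 * inverse (kper y)" for y
  have ident: "mismatch \<kappa> y = F2 y - F1 y" for y
  proof -
    have "kper y \<noteq> 0" "kper y + \<kappa> \<noteq> 0" "\<kappa> + kper y \<noteq> 0" using kper_pos[of y] \<kappa> by auto
    then show ?thesis unfolding mismatch_def F1_def F2_def
      by (simp add: divide_simps power2_eq_square) algebra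
  qed
  have i1: "F1 absolutely_integrable_on {0..1}"
    unfolding F1_def by (intro set_integrable_mult_right coupling_absolutely_integrable \<kappa>)
  have i2: "F2 absolutely_integrable_on {0..1}"
    unfolding F2_def by (intro set_integral_add(1) set_integrable_mult_right
        inverse_kper_absolutely_integrable bounded_measurable_absolutely_integrable[where B="1/2"]) auto
  have "(\<lambda>y. F2 y - F1 y) absolutely_integrable_on {0..1}" using i2 i1 by (rule set_integral_diff(1))
  then show "mismatch \<kappa> absolutely_integrable_on {0..1}" by (simp add: ident[abs_def])
  have "cell_avg (mismatch \<kappa>) = cell_avg F2 - cell_avg F1"
    unfolding cell_avg_def ident by (rule set_integral_diff(2)[OF i2 i1])
  moreover have "cell_avg F2 = 1/2 + \<kappa> / 2 * cell_avg (\<lambda>y. inverse (kper y))"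
  proof -
    have "(\<lambda>y. inverse (kper y)) integrable_on {0..1}"
      by (rule set_lebesgue_integral_eq_integral(1)[OF inverse_kper_absolutely_integrable])
    then have "integral {0..1} F2
        = integral {0..1} (\<lambda>y::real. 1/2::real) + integral {0..1} (\<lambda>y. \<kappa> / 2 * inverse (kper y))"
      unfolding F2_def
      by (intro Henstock_Kurzweil_Integration.integral_add integrable_on_const integrable_on_mult_right)
        auto
    then show ?thesis
      by (simp add: cell_avg_eq_integral[OF i2] cell_avg_eq_integral[OF inverse_kper_absolutely_integrable])
  qed
  moreover have "cell_avg F1 = \<kappa> * coupling_avg \<kappa>"
    unfolding F1_def cell_avg_def by (rule set_integral_mult_right)
  ultimately show "\<kappa> * coupling_avg \<kappa> = 1/2 + \<kappa> / 2 * cell_avg (\<lambda>y. inverse (kper y)) - cell_avg (mismatch \<kappa>)"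
    by simp
qed

end

locale periodic_coefficient = bounded_coefficient +
  assumes kper_periodic: "\<forall>x. kper (x + 1) = kper x"
begin

lemma cell_avg_mismatch_pos:
  assumes \<kappa>: "0 < \<kappa>" and nonconst: "\<nexists>c. AE y in lebesgue. kper y = c"
  shows "0 < cell_avg (mismatch \<kappa>)"
proof (rule ccontr)
  assume "\<not> 0 < cell_avg (mismatch \<kappa>)"
  moreover have "0 \<le> cell_avg (mismatch \<kappa>)"
    unfolding cell_avg_def by (rule set_integral_nonneg[OF mismatch_nonneg[OF \<kappa>]])
  ultimately have "(LINT y:{0..1}|lebesgue. mismatch \<kappa> y) = 0" unfolding cell_avg_def by linarith
  then have "AE y in lebesgue. y \<in> {0..1} \<longrightarrow> mismatch \<kappa> y = 0"
    by (rule set_integral_nonneg_eq_0_AE[OF coupling_avg_eq_mismatch(2)[OF \<kappa>] mismatch_nonneg[OF \<kappa>]])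
  moreover have "mismatch \<kappa> y = 0 \<Longrightarrow> kper y = \<kappa>" for y
    unfolding mismatch_def using kper_pos[of y] \<kappa> by simp
  ultimately have "AE y in lebesgue. y \<in> {0..1} \<longrightarrow> kper y = \<kappa>" by (auto elim: eventually_mono)
  then have "AE y in lebesgue. kper y = \<kappa>" by (rule AE_periodic_of_AE_cell[OF kper_periodic])
  then show False using nonconst by blast
qed

lemma kstar_mult_coupling_avg_lt_1:
  assumes "\<nexists>c. AE y in lebesgue. kper y = c"
  shows "kstar kper * coupling_avg (kstar kper) < 1"
proof -
  have "kstar kper * cell_avg (\<lambda>y. inverse (kper y)) = 1"
    using cell_avg_inverse_pos unfolding kstar_def by simp
  then show ?thesis
    using coupling_avg_eq_mismatch(1)[OF kstar_pos] cell_avg_mismatch_pos[OF kstar_pos assms] by simp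
qed

end

section \<open>The layered interval\<close>

lemma regions_lmeasurable [simp]:
  "D_set b L \<in> lmeasurable" "Df_set a \<in> lmeasurable" "Dc_set a b \<in> lmeasurable"
  unfolding D_set_def Dc_set_def Df_set_def by (auto intro: fmeasurable.Un)

lemma regions_sets [simp, measurable]:
  "D_set b L \<in> sets lebesgue" "Df_set a \<in> sets lebesgue" "Dc_set a b \<in> sets lebesgue"
  using regions_lmeasurable by (simp_all add: fmeasurable_def)

locale layered_interval =
  fixes a b L :: real
  assumes a_pos: "0 < a" and a_lt_b: "a < b" and b_lt_L: "b < L"
begin

lemma regions_disjoint:
  "D_set b L \<inter> Df_set a = {}" "D_set b L \<inter> Dc_set a b = {}" "Df_set a \<inter> Dc_set a b = {}"
  unfolding D_set_def Dc_set_def Df_set_def using a_pos a_lt_b b_lt_L by auto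

lemma measure_regions:
  "measure lebesgue (D_set b L) = 2 * (L - b)" "measure lebesgue (Df_set a) = 2 * a"
  "measure lebesgue (Dc_set a b) = 2 * (b - a)"
  "measure lebesgue (Dc_set a b \<union> Df_set a) = 2 * b"
  "measure lebesgue (D_set b L \<union> Dc_set a b \<union> Df_set a) = 2 * L"
proof -
  have Un: "measure lebesgue (A \<union> B) = measure lebesgue A + measure lebesgue B"
    if "A \<in> lmeasurable" "B \<in> lmeasurable" "A \<inter> B = {}" for A B
    using measure_Un3[OF that(1,2)] that(3) by simp
  show D: "measure lebesgue (D_set b L) = 2 * (L - b)"
    unfolding D_set_def using Un[of "{-L<..<-b}" "{b<..<L}"] a_pos a_lt_b b_lt_L by auto
  show Df: "measure lebesgue (Df_set a) = 2 * a" unfolding Df_set_def using a_pos by simp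
  show Dc: "measure lebesgue (Dc_set a b) = 2 * (b - a)"
    unfolding Dc_set_def using Un[of "{-b<..<-a}" "{a<..<b}"] a_pos a_lt_b by auto
  show "measure lebesgue (Dc_set a b \<union> Df_set a) = 2 * b"
    using Un[of "Dc_set a b" "Df_set a"] regions_disjoint Dc Df by (simp add: Int_commute)
  moreover have "(D_set b L \<union> Dc_set a b) \<inter> Df_set a = {}" using regions_disjoint by blast
  ultimately show "measure lebesgue (D_set b L \<union> Dc_set a b \<union> Df_set a) = 2 * L"
    using Un[of "D_set b L \<union> Dc_set a b" "Df_set a"] Un[of "D_set b L" "Dc_set a b"] regions_disjoint D Dc Df
    by (simp add: fmeasurable.Un)
qed

lemma integral_split_regions:
  fixes f :: "real \<Rightarrow> real"
  assumes f: "f absolutely_integrable_on {-L..L}"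
  shows "integral {-L..L} f
    = (LINT x:D_set b L|lebesgue. f x) + (LINT x:Df_set a|lebesgue. f x) + (LINT x:Dc_set a b|lebesgue. f x)"
proof -
  have le: "-L \<le> -b" "-b \<le> -a" "-a \<le> a" "a \<le> b" "b \<le> L" using a_pos a_lt_b b_lt_L by auto
  have sub: "f absolutely_integrable_on {x..y}" if "-L \<le> x" "y \<le> L" for x y
    by (rule absolutely_integrable_on_subinterval[OF f that])
  have "(LINT x:D_set b L|lebesgue. f x) = integral {-L..-b} f + integral {b..L} f"
    unfolding D_set_def by (rule set_integral_Ioo_Un(1)) (use sub le in auto)
  moreover have "(LINT x:Dc_set a b|lebesgue. f x) = integral {-b..-a} f + integral {a..b} f"
    unfolding Dc_set_def by (rule set_integral_Ioo_Un(1)) (use sub le in auto)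
  moreover have "(LINT x:Df_set a|lebesgue. f x) = integral {-a..a} f"
    unfolding Df_set_def by (rule set_lebesgue_integral_Ioo_eq_integral) (use sub le in auto)
  moreover have "integral {-L..-b} f + integral {-b..L} f = integral {-L..L} f"
    by (rule integral_combine_absolutely_integrable[OF f]) (use le in linarith)+
  moreover have "integral {-b..-a} f + integral {-a..L} f = integral {-b..L} f"
    "integral {-a..a} f + integral {a..L} f = integral {-a..L} f"
    "integral {a..b} f + integral {b..L} f = integral {a..L} f"
    by (rule integral_combine_absolutely_integrable[OF sub]; use le in linarith)+
  ultimately show ?thesis by linarith
qed

lemma admissible_coupling:
  assumes adm: "admissible a b L ubar gbar u g"
  shows "AE x in lebesgue. x \<in> Dc_set a b \<longrightarrow> gbar x = g x" "ubar (-b) = u (-b)" "ubar b = u b"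
proof -
  have H1: "H1_on (-L) (-a) ubar gbar" "H1_on a L ubar gbar" "H1_on (-b) b u g"
    and con: "\<forall>\<phi> \<psi>. H1_on (-b) (-a) \<phi> \<psi> \<and> H1_on a b \<phi> \<psi> \<longrightarrow>
        (LINT x:Dc_set a b|lebesgue. (gbar x - g x) * \<psi> x + (ubar x - u x) * \<phi> x) = 0"
    using adm unfolding admissible_def by blast+
  have le: "-L \<le> -b" "-b \<le> -a" "-a \<le> b" "-b \<le> a" "a \<le> b" "b \<le> L" using a_pos a_lt_b b_lt_L by auto
  have left: "H1_on (-b) (-a) (\<lambda>x. ubar x - u x) (\<lambda>x. gbar x - g x)"
    by (intro H1_on_diff H1_on_subinterval[OF H1(1) le(1,2) order.refl]
        H1_on_subinterval[OF H1(3) order.refl le(2,3)])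
  have right: "H1_on a b (\<lambda>x. ubar x - u x) (\<lambda>x. gbar x - g x)"
    by (intro H1_on_diff H1_on_subinterval[OF H1(2) order.refl le(5,6)]
        H1_on_subinterval[OF H1(3) le(4,5) order.refl])
  define F where "F x = (gbar x - g x)^2 + (ubar x - u x)^2" for x
  have "(LINT x:Dc_set a b|lebesgue. F x) = 0"
    using con left right unfolding F_def by (simp add: power2_eq_square)
  moreover have "set_integrable lebesgue (Dc_set a b) F"
  proof -
    have "F absolutely_integrable_on {x..y}" if "H1_on x y (\<lambda>x. ubar x - u x) (\<lambda>x. gbar x - g x)" for x y
      unfolding F_def by (intro set_integral_add(1) H1_on_absolutely_integrable(2)[OF that]
          H1_on_square_absolutely_integrable[OF that] order.refl)
    then show ?thesis unfolding Dc_set_def using left right a_pos by (intro set_integral_Ioo_Un(2)) auto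
  qed
  ultimately have "AE x in lebesgue. x \<in> Dc_set a b \<longrightarrow> F x = 0"
    using set_integral_nonneg_eq_0_AE[of "Dc_set a b" F] unfolding F_def by auto
  then have ae: "AE x in lebesgue. x \<in> Dc_set a b \<longrightarrow> gbar x - g x = 0 \<and> ubar x - u x = 0"
    by eventually_elim (simp add: F_def)
  then show "AE x in lebesgue. x \<in> Dc_set a b \<longrightarrow> gbar x = g x" by eventually_elim simp
  have "ubar x - u x = 0" if "x \<in> {-b..-a}" for x
    by (rule H1_on_eq_0_if_AE[OF left _ _ that]) (use ae a_lt_b in \<open>auto simp: Dc_set_def elim: eventually_mono\<close>)
  then show "ubar (-b) = u (-b)" using le by simp
  have "ubar x - u x = 0" if "x \<in> {a..b}" for x
    by (rule H1_on_eq_0_if_AE[OF right _ _ that]) (use ae a_lt_b in \<open>auto simp: Dc_set_def elim: eventually_mono\<close>)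
  then show "ubar b = u b" using le by simp
qed

lemma admissible_total_flux:
  assumes adm: "admissible a b L ubar gbar u g"
  shows "(LINT x:D_set b L|lebesgue. gbar x) + (LINT x:Df_set a|lebesgue. g x)
      + (LINT x:Dc_set a b|lebesgue. g x) = 2 * L"
proof -
  have H1: "H1_on (-L) (-a) ubar gbar" "H1_on a L ubar gbar" "H1_on (-b) b u g"
    and bc: "ubar (-L) = -L" "ubar L = L"
    using adm unfolding admissible_def by blast+
  have le: "-L \<le> -b" "-b \<le> -a" "-a \<le> a" "a \<le> b" "b \<le> L" using a_pos a_lt_b b_lt_L by auto
  have "(LINT x:D_set b L|lebesgue. gbar x) = integral {-L..-b} gbar + integral {b..L} gbar"
    unfolding D_set_def
    by (rule set_integral_Ioo_Un(1)[OF H1_on_absolutely_integrable(1)[OF H1(1)]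
        H1_on_absolutely_integrable(1)[OF H1(2)]]) (use le in linarith)+
  moreover have "(LINT x:Dc_set a b|lebesgue. g x) = integral {-b..-a} g + integral {a..b} g"
    unfolding Dc_set_def
    by (rule set_integral_Ioo_Un(1)[OF H1_on_absolutely_integrable(1)[OF H1(3)]
        H1_on_absolutely_integrable(1)[OF H1(3)]]) (use le in linarith)+
  moreover have "(LINT x:Df_set a|lebesgue. g x) = integral {-a..a} g"
    unfolding Df_set_def
    by (rule set_lebesgue_integral_Ioo_eq_integral[OF H1_on_absolutely_integrable(1)[OF H1(3)]])
      (use le in linarith)+
  moreover have "ubar (-b) - ubar (-L) = integral {-L..-b} gbar"
    by (rule H1_on_increment[OF H1(1)]) (use le in linarith)+
  moreover have "ubar L - ubar b = integral {b..L} gbar"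
    by (rule H1_on_increment[OF H1(2)]) (use le in linarith)+
  moreover have "u (-a) - u (-b) = integral {-b..-a} g" "u a - u (-a) = integral {-a..a} g"
    "u b - u a = integral {a..b} g"
    by (rule H1_on_increment[OF H1(3)]; use le in linarith)+
  ultimately show ?thesis using bc admissible_coupling(2,3)[OF adm] by linarith
qed

end

section \<open>Minimisers of the coupled energy\<close>

definition core_resistance :: "real \<Rightarrow> real \<Rightarrow> (real \<Rightarrow> real) \<Rightarrow> real \<Rightarrow> real" where
  "core_resistance a b kper k = measure lebesgue (Df_set a) / kstar kper
     + measure lebesgue (Dc_set a b) * cell_avg (\<lambda>y. 2 / (k + kper y))"

definition total_resistance :: "real \<Rightarrow> real \<Rightarrow> real \<Rightarrow> (real \<Rightarrow> real) \<Rightarrow> real \<Rightarrow> real" where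
  "total_resistance a b L kper k = measure lebesgue (D_set b L) / k + core_resistance a b kper k"

definition flux :: "real \<Rightarrow> real \<Rightarrow> real \<Rightarrow> (real \<Rightarrow> real) \<Rightarrow> real \<Rightarrow> real" where
  "flux a b L kper k =
     measure lebesgue (D_set b L \<union> Dc_set a b \<union> Df_set a) / total_resistance a b L kper k"

text \<open>On D_c both gradients agree for admissible pairs, so the energy there sees the mean of the
  two conductivities.\<close>

definition conductivity :: "real \<Rightarrow> real \<Rightarrow> (real \<Rightarrow> real) \<Rightarrow> real \<Rightarrow> real \<Rightarrow> real \<Rightarrow> real" where
  "conductivity a b kper \<epsilon> k x =
     (if x \<in> Df_set a then kper (x / \<epsilon>) else if x \<in> Dc_set a b then (k + kper (x / \<epsilon>)) / 2 else k)"

definition optimal_gradient :: "real \<Rightarrow> real \<Rightarrow> real \<Rightarrow> (real \<Rightarrow> real) \<Rightarrow> real \<Rightarrow> real \<Rightarrow> real \<Rightarrow> real" where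
  "optimal_gradient a b L kper \<epsilon> k x = flux a b L kper k / conductivity a b kper \<epsilon> k x"

definition optimal_potential :: "real \<Rightarrow> real \<Rightarrow> real \<Rightarrow> (real \<Rightarrow> real) \<Rightarrow> real \<Rightarrow> real \<Rightarrow> real \<Rightarrow> real" where
  "optimal_potential a b L kper \<epsilon> k x = -L + integral {-L..x} (optimal_gradient a b L kper \<epsilon> k)"

locale homogenization = layered_interval + periodic_coefficient +
  fixes \<epsilon> :: real
  assumes eps_pos: "0 < \<epsilon>"
    and Df_cells: "\<exists>n::nat. 2 * a = real n * \<epsilon>" and Dc_cells: "\<exists>n::nat. b - a = real n * \<epsilon>"
begin

lemma kper_rescaled_measurable [measurable]: "(\<lambda>x. kper (x / \<epsilon>)) \<in> borel_measurable lebesgue"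
  using borel_measurable_affine[OF kper_measurable, of "1/\<epsilon>" 0] eps_pos
  by (simp add: divide_inverse mult.commute)

lemma set_integral_inverse_kper_Df_set:
  "(LINT x:Df_set a|lebesgue. 1 / kper (x / \<epsilon>)) = measure lebesgue (Df_set a) / kstar kper"
proof -
  obtain n where n: "2 * a = real n * \<epsilon>" using Df_cells by blast
  have bd: "\<bar>inverse (kper y)\<bar> \<le> 1 / \<alpha>" for y
    using kper_pos[of y] kper_ge[of y] alpha_pos by (simp add: inverse_eq_divide frac_le)
  have "(LINT x:{-a<..<a}|lebesgue. 1 / kper (x / \<epsilon>)) = (a - -a) * cell_avg (\<lambda>y. inverse (kper y))"
    using set_integral_periodic_rescaled[OF _ borel_measurable_inverse[OF kper_measurable] bd eps_pos,
        where p="-a" and q=a and n=n] kper_periodic n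
    by (simp add: inverse_eq_divide)
  then show ?thesis
    unfolding Df_set_def by (simp add: measure_regions(2)[unfolded Df_set_def] inverse_kstar[symmetric])
qed

lemma set_integral_inverse_mean_conductivity_Dc_set:
  assumes kbar: "0 < kbar"
  shows "(LINT x:Dc_set a b|lebesgue. 1 / ((kbar + kper (x / \<epsilon>)) / 2))
       = measure lebesgue (Dc_set a b) * coupling_avg kbar"
proof -
  obtain n2 where n2: "b - a = real n2 * \<epsilon>" using Dc_cells by blast
  define f where "f y = 2 / (kbar + kper y)" for y
  have per: "\<forall>x. f (x + 1) = f x" using kper_periodic unfolding f_def by simp
  have fm: "f \<in> borel_measurable lebesgue" unfolding f_def using kper_measurable by measurable
  have bd: "\<bar>f y\<bar> \<le> 2 / \<alpha>" for y
    unfolding f_def using coupling_pos[OF kbar] coupling_le[OF kbar] by (simp add: less_imp_le)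
  have fe: "(\<lambda>x. f (x / \<epsilon>)) absolutely_integrable_on {p<..<q}" for p q
    using borel_measurable_affine[OF fm, of "1/\<epsilon>" 0] eps_pos
    by (intro bounded_measurable_absolutely_integrable[OF _ bd]) (auto simp: divide_inverse mult.commute)
  have "(LINT x:Dc_set a b|lebesgue. f (x / \<epsilon>))
      = (LINT x:{-b<..<-a}|lebesgue. f (x / \<epsilon>)) + (LINT x:{a<..<b}|lebesgue. f (x / \<epsilon>))"
    unfolding Dc_set_def by (rule set_integral_Un[OF _ fe fe]) (use a_pos in auto)
  also have "\<dots> = (-a - -b) * cell_avg f + (b - a) * cell_avg f"
    using set_integral_periodic_rescaled[OF per fm bd eps_pos, where p="-b" and q="-a" and n=n2]
      set_integral_periodic_rescaled[OF per fm bd eps_pos, where p=a and q=b and n=n2] n2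
    by (simp add: algebra_simps)
  finally show ?thesis unfolding f_def by (simp add: measure_regions(3) algebra_simps)
qed

lemma total_resistance_pos: "0 < kbar \<Longrightarrow> 0 < total_resistance a b L kper kbar"
  unfolding total_resistance_def core_resistance_def measure_regions
  using a_pos a_lt_b b_lt_L kstar_pos coupling_avg_bounds(1)[of kbar]
  by (intro add_pos_nonneg divide_pos_pos mult_nonneg_nonneg) auto

lemma flux_mult_total_resistance:
  assumes "0 < kbar"
  shows "flux a b L kper kbar * total_resistance a b L kper kbar
     = measure lebesgue (D_set b L \<union> Dc_set a b \<union> Df_set a)"
  unfolding flux_def using total_resistance_pos[OF assms] by simp

lemma admissible_integrable:
  assumes adm: "admissible a b L ubar gbar u g"
  shows "set_integrable lebesgue (D_set b L) gbar"
    "set_integrable lebesgue (D_set b L) (\<lambda>x. (gbar x)^2)"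
    "set_integrable lebesgue (Dc_set a b) (\<lambda>x. (gbar x)^2)"
    "set_integrable lebesgue (Df_set a) g"
    "set_integrable lebesgue (Df_set a) (\<lambda>x. (g x)^2)"
    "set_integrable lebesgue (Dc_set a b) g"
    "set_integrable lebesgue (Dc_set a b) (\<lambda>x. (g x)^2)"
proof -
  have H1: "H1_on (-L) (-a) ubar gbar" "H1_on a L ubar gbar" "H1_on (-b) b u g"
    using adm unfolding admissible_def by blast+
  have le: "-L \<le> -b" "-b \<le> -a" "-a \<le> a" "a \<le> b" "b \<le> L" using a_pos a_lt_b b_lt_L by auto
  note ub = H1_on_absolutely_integrable[OF H1(1)] H1_on_absolutely_integrable[OF H1(2)]
  note u = H1_on_absolutely_integrable[OF H1(3)]
  show "set_integrable lebesgue (D_set b L) gbar"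
    unfolding D_set_def by (rule set_integral_Ioo_Un(2)[OF ub(1) ub(3)]) (use le in linarith)+
  show "set_integrable lebesgue (D_set b L) (\<lambda>x. (gbar x)^2)"
    unfolding D_set_def by (rule set_integral_Ioo_Un(2)[OF ub(2) ub(4)]) (use le in linarith)+
  show "set_integrable lebesgue (Dc_set a b) (\<lambda>x. (gbar x)^2)"
    unfolding Dc_set_def by (rule set_integral_Ioo_Un(2)[OF ub(2) ub(4)]) (use le in linarith)+
  show "set_integrable lebesgue (Df_set a) g" "set_integrable lebesgue (Df_set a) (\<lambda>x. (g x)^2)"
    unfolding Df_set_def absolutely_integrable_on_Ioo_iff_Icc by (rule u; use le in linarith)+
  show "set_integrable lebesgue (Dc_set a b) g"
    unfolding Dc_set_def by (rule set_integral_Ioo_Un(2)[OF u(1) u(1)]) (use le in linarith)+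
  show "set_integrable lebesgue (Dc_set a b) (\<lambda>x. (g x)^2)"
    unfolding Dc_set_def by (rule set_integral_Ioo_Un(2)[OF u(2) u(2)]) (use le in linarith)+
qed

lemma conductivity_regions:
  assumes "0 < kbar"
  shows "x \<in> D_set b L \<Longrightarrow> conductivity a b kper \<epsilon> kbar x = kbar"
    "x \<in> Df_set a \<Longrightarrow> conductivity a b kper \<epsilon> kbar x = kper (x / \<epsilon>)"
    "x \<in> Dc_set a b \<Longrightarrow> conductivity a b kper \<epsilon> kbar x = (kbar + kper (x / \<epsilon>)) / 2"
    "min \<alpha> kbar \<le> conductivity a b kper \<epsilon> kbar x" "conductivity a b kper \<epsilon> kbar x \<le> max \<beta> kbar"
    "0 < conductivity a b kper \<epsilon> kbar x"
  using regions_disjoint kper_ge[of "x / \<epsilon>"] kper_le[of "x / \<epsilon>"] assms alpha_pos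
  unfolding conductivity_def by auto

lemma conductivity_measurable [measurable]:
  "conductivity a b kper \<epsilon> kbar \<in> borel_measurable lebesgue"
  unfolding conductivity_def by measurable

lemma conductivity_mult_absolutely_integrable:
  assumes "0 < kbar" "S \<in> sets lebesgue" "f absolutely_integrable_on S"
  shows "(\<lambda>x. c * conductivity a b kper \<epsilon> kbar x * f x) absolutely_integrable_on S"
proof -
  have "\<bar>c * conductivity a b kper \<epsilon> kbar x\<bar> \<le> \<bar>c\<bar> * max \<beta> kbar" for x
    using conductivity_regions(5,6)[OF assms(1), of x] by (simp add: abs_mult mult_left_mono)
  then show ?thesis by (intro bounded_measurable_mult_absolutely_integrable assms(2,3)) auto
qed

lemma inverse_conductivity_absolutely_integrable:
  assumes "0 < kbar" "S \<in> lmeasurable"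
  shows "(\<lambda>x. 1 / conductivity a b kper \<epsilon> kbar x) absolutely_integrable_on S"
proof (rule bounded_measurable_absolutely_integrable[OF _ _ assms(2)])
  show "\<bar>1 / conductivity a b kper \<epsilon> kbar x\<bar> \<le> 1 / min \<alpha> kbar" for x
    using conductivity_regions(4,6)[OF assms(1), of x] assms(1) alpha_pos by (simp add: frac_le)
qed measurable

lemma set_integral_inverse_conductivity_total:
  assumes "0 < kbar"
  shows "(LINT x:D_set b L|lebesgue. 1 / conductivity a b kper \<epsilon> kbar x)
      + (LINT x:Df_set a|lebesgue. 1 / conductivity a b kper \<epsilon> kbar x)
      + (LINT x:Dc_set a b|lebesgue. 1 / conductivity a b kper \<epsilon> kbar x)
    = total_resistance a b L kper kbar"
proof -
  have "(LINT x:D_set b L|lebesgue. 1 / conductivity a b kper \<epsilon> kbar x) = (LINT x:D_set b L|lebesgue. 1 / kbar)"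
    "(LINT x:Df_set a|lebesgue. 1 / conductivity a b kper \<epsilon> kbar x) = (LINT x:Df_set a|lebesgue. 1 / kper (x / \<epsilon>))"
    "(LINT x:Dc_set a b|lebesgue. 1 / conductivity a b kper \<epsilon> kbar x)
      = (LINT x:Dc_set a b|lebesgue. 1 / ((kbar + kper (x / \<epsilon>)) / 2))"
    by (intro set_lebesgue_integral_cong regions_sets; simp add: conductivity_regions[OF assms])+
  then show ?thesis
    unfolding total_resistance_def core_resistance_def set_integral_inverse_kper_Df_set
      set_integral_inverse_mean_conductivity_Dc_set[OF assms]
    by (simp add: set_integral_const_lmeasurable)
qed

lemma energy_eq_conductivity:
  assumes "0 < kbar" and adm: "admissible a b L ubar gbar u g"
  shows "energy a b L kper \<epsilon> kbar gbar g = (1/2) *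
      ((LINT x:D_set b L|lebesgue. conductivity a b kper \<epsilon> kbar x * (gbar x)^2)
     + (LINT x:Df_set a|lebesgue. conductivity a b kper \<epsilon> kbar x * (g x)^2)
     + (LINT x:Dc_set a b|lebesgue. conductivity a b kper \<epsilon> kbar x * (g x)^2))"
proof -
  note I = admissible_integrable[OF adm]
  have "(LINT x:D_set b L|lebesgue. kbar * (gbar x)^2)
      = (LINT x:D_set b L|lebesgue. conductivity a b kper \<epsilon> kbar x * (gbar x)^2)"
    "(LINT x:Df_set a|lebesgue. kper (x / \<epsilon>) * (g x)^2)
      = (LINT x:Df_set a|lebesgue. conductivity a b kper \<epsilon> kbar x * (g x)^2)"
    by (intro set_lebesgue_integral_cong regions_sets; simp add: conductivity_regions[OF assms(1)])+
  moreover have "(LINT x:Dc_set a b|lebesgue. (1/2) * kbar * (gbar x)^2 + (1/2) * kper (x / \<epsilon>) * (g x)^2)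
      = (LINT x:Dc_set a b|lebesgue. conductivity a b kper \<epsilon> kbar x * (g x)^2)"
  proof (rule set_integral_cong_AE_integrable)
    have "(\<lambda>x. (1/2) * kper (x / \<epsilon>) * (g x)^2) absolutely_integrable_on Dc_set a b"
      using kper_pos kper_le
      by (intro bounded_measurable_mult_absolutely_integrable[where B="\<beta> / 2"] I(7)) (auto simp: less_imp_le)
    then show "set_integrable lebesgue (Dc_set a b) (\<lambda>x. (1/2) * kbar * (gbar x)^2 + (1/2) * kper (x / \<epsilon>) * (g x)^2)"
      by (intro set_integral_add(1) set_integrable_mult_right I(3))
    show "set_integrable lebesgue (Dc_set a b) (\<lambda>x. conductivity a b kper \<epsilon> kbar x * (g x)^2)"
      using conductivity_mult_absolutely_integrable[OF assms(1) regions_sets(3) I(7), of 1] by simp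
    show "AE x in lebesgue. x \<in> Dc_set a b \<longrightarrow>
        (1/2) * kbar * (gbar x)^2 + (1/2) * kper (x / \<epsilon>) * (g x)^2 = conductivity a b kper \<epsilon> kbar x * (g x)^2"
      using admissible_coupling(1)[OF adm]
      by eventually_elim (simp add: conductivity_regions[OF assms(1)] field_simps)
  qed
  ultimately show ?thesis unfolding energy_def by simp
qed

definition energy_defect :: "real \<Rightarrow> (real \<Rightarrow> real) \<Rightarrow> (real \<Rightarrow> real) \<Rightarrow> real" where
  "energy_defect kbar gbar g =
     (let c = conductivity a b kper \<epsilon> kbar; m = flux a b L kper kbar in
        (LINT x:D_set b L|lebesgue. c x * (gbar x - m / c x)^2)
      + (LINT x:Df_set a|lebesgue. c x * (g x - m / c x)^2)
      + (LINT x:Dc_set a b|lebesgue. c x * (g x - m / c x)^2))"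

lemma set_integral_conductivity_complete_square:
  assumes "0 < kbar" "X \<in> lmeasurable" "set_integrable lebesgue X y" "set_integrable lebesgue X (\<lambda>x. (y x)^2)"
  defines "c \<equiv> conductivity a b kper \<epsilon> kbar"
  shows "(LINT x:X|lebesgue. c x * (y x - m / c x)^2)
      = (LINT x:X|lebesgue. c x * (y x)^2) - 2 * m * (LINT x:X|lebesgue. y x)
        + m^2 * (LINT x:X|lebesgue. 1 / c x)"
    "set_integrable lebesgue X (\<lambda>x. c x * (y x - m / c x)^2)"
proof -
  have "set_integrable lebesgue X (\<lambda>x. c x * (y x)^2)"
    using conductivity_mult_absolutely_integrable[of kbar X _ 1] assms by (simp add: fmeasurable_def)
  moreover have "set_integrable lebesgue X (\<lambda>x. 1 / c x)"
    unfolding c_def by (rule inverse_conductivity_absolutely_integrable[OF assms(1,2)])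
  moreover have "X \<in> sets lebesgue" using assms(2) by (simp add: fmeasurable_def)
  ultimately show "(LINT x:X|lebesgue. c x * (y x - m / c x)^2)
      = (LINT x:X|lebesgue. c x * (y x)^2) - 2 * m * (LINT x:X|lebesgue. y x)
        + m^2 * (LINT x:X|lebesgue. 1 / c x)"
    "set_integrable lebesgue X (\<lambda>x. c x * (y x - m / c x)^2)"
    using set_integral_complete_square[of X c y] assms(3) conductivity_regions(6)[OF assms(1)]
    unfolding c_def by blast+
qed

text \<open>The cross term 2 m \<integral> G and the term m^2 \<integral> 1/c both equal 2 m L, by the flux
  identity and the choice of m.\<close>

lemma energy_complete_square:
  assumes kbar: "0 < kbar" and adm: "admissible a b L ubar gbar u g"
  shows "energy a b L kper \<epsilon> kbar gbar g = flux a b L kper kbar * L + (1/2) * energy_defect kbar gbar g"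
proof -
  define c where "c = conductivity a b kper \<epsilon> kbar"
  define m where "m = flux a b L kper kbar"
  note I = admissible_integrable[OF adm]
  note sq = set_integral_conductivity_complete_square(1)[OF kbar, where m=m, folded c_def]
  have "m * (LINT x:D_set b L|lebesgue. gbar x) + m * (LINT x:Df_set a|lebesgue. g x)
      + m * (LINT x:Dc_set a b|lebesgue. g x) = m * (2 * L)"
    using admissible_total_flux[OF adm] by (simp only: distrib_left[symmetric])
  moreover have "m^2 * (LINT x:D_set b L|lebesgue. 1 / c x) + m^2 * (LINT x:Df_set a|lebesgue. 1 / c x)
      + m^2 * (LINT x:Dc_set a b|lebesgue. 1 / c x) = m * (2 * L)"
    using set_integral_inverse_conductivity_total[OF kbar] flux_mult_total_resistance[OF kbar]
    unfolding c_def m_def measure_regions(5) by (simp add: power2_eq_square distrib_left[symmetric])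
  ultimately show ?thesis
    unfolding energy_eq_conductivity[OF kbar adm] energy_defect_def Let_def
    unfolding c_def[symmetric] m_def[symmetric] sq[OF regions_lmeasurable(1) I(1,2)]
      sq[OF regions_lmeasurable(2) I(4,5)] sq[OF regions_lmeasurable(3) I(6,7)]
    by (simp add: algebra_simps)
qed

lemma set_integral_conductivity_square_nonneg:
  assumes "0 < kbar"
  defines "c \<equiv> conductivity a b kper \<epsilon> kbar"
  shows "0 \<le> (LINT x:X|lebesgue. c x * (y x - m / c x)^2)"
  using conductivity_regions(6)[OF assms(1)] unfolding c_def
  by (intro set_integral_nonneg mult_nonneg_nonneg) (auto intro: less_imp_le)

lemma optimal_gradient_absolutely_integrable:
  assumes "0 < kbar"
  shows "optimal_gradient a b L kper \<epsilon> kbar absolutely_integrable_on {p..q}"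
    "(\<lambda>x. (optimal_gradient a b L kper \<epsilon> kbar x)^2) absolutely_integrable_on {p..q}"
proof -
  define B where "B = \<bar>flux a b L kper kbar\<bar> / min \<alpha> kbar"
  have bnd: "\<bar>optimal_gradient a b L kper \<epsilon> kbar x\<bar> \<le> B" for x
    unfolding optimal_gradient_def B_def using conductivity_regions(4,6)[OF assms, of x] assms alpha_pos
    by (simp add: abs_divide divide_left_mono)
  have bnd2: "\<bar>(optimal_gradient a b L kper \<epsilon> kbar x)^2\<bar> \<le> B^2" for x
    using power_mono[OF bnd abs_ge_zero, of x 2] by simp
  have meas: "optimal_gradient a b L kper \<epsilon> kbar \<in> borel_measurable lebesgue"
    unfolding optimal_gradient_def by measurable
  show "optimal_gradient a b L kper \<epsilon> kbar absolutely_integrable_on {p..q}"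
    by (rule bounded_measurable_absolutely_integrable[OF meas bnd]) simp
  show "(\<lambda>x. (optimal_gradient a b L kper \<epsilon> kbar x)^2) absolutely_integrable_on {p..q}"
    by (rule bounded_measurable_absolutely_integrable[OF borel_measurable_power[OF meas] bnd2]) simp
qed

lemma integral_optimal_gradient:
  assumes "0 < kbar"
  shows "integral {-L..L} (optimal_gradient a b L kper \<epsilon> kbar) = 2 * L"
proof -
  have h: "optimal_gradient a b L kper \<epsilon> kbar
      = (\<lambda>x. flux a b L kper kbar * (1 / conductivity a b kper \<epsilon> kbar x))"
    by (simp add: fun_eq_iff optimal_gradient_def)
  show ?thesis
    using integral_split_regions[OF optimal_gradient_absolutely_integrable(1)[OF assms]]
      set_integral_inverse_conductivity_total[OF assms] flux_mult_total_resistance[OF assms]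
    unfolding h set_integral_mult_right measure_regions(5) by (simp add: distrib_left[symmetric])
qed

lemma optimal_admissible:
  assumes "0 < kbar"
  defines "h \<equiv> optimal_gradient a b L kper \<epsilon> kbar" and "U \<equiv> optimal_potential a b L kper \<epsilon> kbar"
  shows "admissible a b L U h U h"
  unfolding admissible_def
proof (intro conjI allI impI)
  have U: "U = (\<lambda>x. -L + integral {-L..x} h)" by (simp add: fun_eq_iff U_def h_def optimal_potential_def)
  note H1 = H1_on_integral[OF optimal_gradient_absolutely_integrable[OF assms(1)], folded h_def]
  show "H1_on (-L) (-a) U h" unfolding U by (rule H1) (use a_pos a_lt_b b_lt_L in linarith)+
  show "H1_on a L U h" unfolding U by (rule H1) (use a_pos a_lt_b b_lt_L in linarith)+
  show "H1_on (-b) b U h" unfolding U by (rule H1) (use a_pos a_lt_b b_lt_L in linarith)+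
  show "U (-L) = -L" "U L = L" using integral_optimal_gradient[OF assms(1)] by (simp_all add: U h_def)
qed simp

lemma energy_defect_optimal:
  assumes "0 < kbar"
  shows "energy_defect kbar (optimal_gradient a b L kper \<epsilon> kbar) (optimal_gradient a b L kper \<epsilon> kbar) = 0"
  unfolding energy_defect_def Let_def optimal_gradient_def by simp

lemma minimizer_gradient_on_D:
  assumes kbar: "0 < kbar" and mn: "is_minimizer a b L kper \<epsilon> kbar ubar gbar u g"
  shows "AE x in lebesgue. x \<in> D_set b L \<longrightarrow> gbar x = flux a b L kper kbar / kbar"
proof -
  define c where "c = conductivity a b kper \<epsilon> kbar"
  define m where "m = flux a b L kper kbar"
  have adm: "admissible a b L ubar gbar u g" using mn unfolding is_minimizer_def by blast
  note I = admissible_integrable[OF adm]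
  have "energy a b L kper \<epsilon> kbar gbar g
      \<le> energy a b L kper \<epsilon> kbar (optimal_gradient a b L kper \<epsilon> kbar) (optimal_gradient a b L kper \<epsilon> kbar)"
    using mn optimal_admissible[OF kbar] unfolding is_minimizer_def by blast
  then have "energy_defect kbar gbar g \<le> 0"
    using energy_complete_square[OF kbar adm] energy_complete_square[OF kbar optimal_admissible[OF kbar]]
      energy_defect_optimal[OF kbar] by simp
  then have "(LINT x:D_set b L|lebesgue. c x * (gbar x - m / c x)^2)
      + (LINT x:Df_set a|lebesgue. c x * (g x - m / c x)^2)
      + (LINT x:Dc_set a b|lebesgue. c x * (g x - m / c x)^2) \<le> 0"
    unfolding energy_defect_def Let_def c_def m_def .
  moreover have nonneg: "0 \<le> (LINT x:X|lebesgue. c x * (y x - m / c x)^2)" for X y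
    unfolding c_def by (rule set_integral_conductivity_square_nonneg[OF kbar])
  ultimately have "(LINT x:D_set b L|lebesgue. c x * (gbar x - m / c x)^2) = 0"
    using nonneg[of "D_set b L" gbar] nonneg[of "Df_set a" g] nonneg[of "Dc_set a b" g] by linarith
  then have "AE x in lebesgue. x \<in> D_set b L \<longrightarrow> c x * (gbar x - m / c x)^2 = 0"
    using set_integral_conductivity_complete_square(2)[OF kbar regions_lmeasurable(1) I(1,2)]
      conductivity_regions(6)[OF kbar]
    unfolding c_def by (intro set_integral_nonneg_eq_0_AE) (auto intro!: mult_nonneg_nonneg intro: less_imp_le)
  then show ?thesis
    by eventually_elim (use kbar in \<open>simp add: c_def m_def conductivity_regions(1)\<close>)
qed

lemma J1D_eq:
  assumes kbar: "0 < kbar" and ex: "\<exists>ubar gbar u g. is_minimizer a b L kper \<epsilon> kbar ubar gbar u g"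
  shows "J1D a b L kper \<epsilon> kbar = measure lebesgue (D_set b L) * (flux a b L kper kbar / kbar - 1)^2"
proof -
  define v where "v = measure lebesgue (D_set b L) * (flux a b L kper kbar / kbar - 1)^2"
  have val: "(LINT x:D_set b L|lebesgue. (gbar x - 1)^2) = v"
    if mn: "is_minimizer a b L kper \<epsilon> kbar ubar gbar u g" for ubar gbar u g
  proof -
    have adm: "admissible a b L ubar gbar u g" using mn unfolding is_minimizer_def by blast
    have one: "(\<lambda>x. 1::real) absolutely_integrable_on D_set b L"
      by (rule bounded_measurable_absolutely_integrable[where B=1]) auto
    have "(LINT x:D_set b L|lebesgue. (gbar x - 1)^2)
        = (LINT x:D_set b L|lebesgue. (flux a b L kper kbar / kbar - 1)^2)"
    proof (rule set_integral_cong_AE_integrable)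
      show "set_integrable lebesgue (D_set b L) (\<lambda>x. (gbar x - 1)^2)"
        using admissible_integrable(1,2)[OF adm] one
        by (intro absolutely_integrable_square_diff) auto
      show "set_integrable lebesgue (D_set b L) (\<lambda>x. (flux a b L kper kbar / kbar - 1)^2)"
        by (rule bounded_measurable_absolutely_integrable) auto
      show "AE x in lebesgue. x \<in> D_set b L \<longrightarrow> (gbar x - 1)^2 = (flux a b L kper kbar / kbar - 1)^2"
        using minimizer_gradient_on_D[OF kbar mn] by eventually_elim simp
    qed
    then show ?thesis unfolding v_def by (simp add: set_integral_const_lmeasurable)
  qed
  show ?thesis
    unfolding J1D_def v_def[symmetric]
  proof (rule some_equality)
    show "\<exists>ubar gbar u g. is_minimizer a b L kper \<epsilon> kbar ubar gbar u g
        \<and> v = (LINT x:D_set b L|lebesgue. (gbar x - 1)^2)"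
      using ex val by metis
  qed (use val in blast)
qed

section \<open>The optimal conductivity\<close>

lemma scaled_core_resistance_eq:
  "measure lebesgue (Df_set a) * k / kstar kper + measure lebesgue (Dc_set a b) * k * coupling_avg k
    = k * core_resistance a b kper k"
  unfolding core_resistance_def by (simp add: algebra_simps)

lemma flux_div_minus_one:
  assumes "0 < kbar"
  shows "flux a b L kper kbar / kbar - 1
    = (measure lebesgue (Dc_set a b \<union> Df_set a) - kbar * core_resistance a b kper kbar)
      / (measure lebesgue (D_set b L) + kbar * core_resistance a b kper kbar)"
    "0 < measure lebesgue (D_set b L) + kbar * core_resistance a b kper kbar"
proof -
  have R: "kbar * total_resistance a b L kper kbar
      = measure lebesgue (D_set b L) + kbar * core_resistance a b kper kbar"
    unfolding total_resistance_def using assms by (simp add: field_simps)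
  show pos: "0 < measure lebesgue (D_set b L) + kbar * core_resistance a b kper kbar"
    unfolding R[symmetric] using assms total_resistance_pos[OF assms] by simp
  show "flux a b L kper kbar / kbar - 1
    = (measure lebesgue (Dc_set a b \<union> Df_set a) - kbar * core_resistance a b kper kbar)
      / (measure lebesgue (D_set b L) + kbar * core_resistance a b kper kbar)"
    unfolding flux_def using pos R assms by (simp add: field_simps measure_regions)
qed

lemma scaled_core_resistance_strict_mono:
  assumes "0 < k" "k < k'"
  shows "k * core_resistance a b kper k < k' * core_resistance a b kper k'"
proof -
  have "measure lebesgue (Df_set a) * k / kstar kper < measure lebesgue (Df_set a) * k' / kstar kper"
    using assms kstar_pos a_pos by (simp add: measure_regions divide_strict_right_mono)
  moreover have "measure lebesgue (Dc_set a b) * (k * coupling_avg k) \<le> measure lebesgue (Dc_set a b) * (k' * coupling_avg k')"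
    using mult_coupling_avg_mono[of k k'] assms a_lt_b by (intro mult_left_mono) (auto simp: measure_regions)
  ultimately show ?thesis unfolding scaled_core_resistance_eq[symmetric] by (simp add: mult.assoc)
qed

lemma scaled_core_resistance_root:
  "\<exists>k>0. k * core_resistance a b kper k = measure lebesgue (Dc_set a b \<union> Df_set a)"
proof (rule exists_root_between_linear_bounds)
  show "continuous_on {0<..} (\<lambda>k. k * core_resistance a b kper k)"
    unfolding core_resistance_def
    by (intro continuous_intros continuous_on_coupling_avg)
  show "0 < measure lebesgue (Df_set a) / kstar kper" using kstar_pos a_pos by (simp add: measure_regions)
  show "measure lebesgue (Df_set a) / kstar kper \<le> measure lebesgue (Df_set a) / kstar kper + measure lebesgue (Dc_set a b) * (2 / \<alpha>)"
    using a_lt_b alpha_pos by (simp add: measure_regions)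
  fix k :: real assume k: "0 < k"
  show "measure lebesgue (Df_set a) / kstar kper * k \<le> k * core_resistance a b kper k"
    using coupling_avg_bounds(1)[OF k] k a_lt_b
    by (simp add: core_resistance_def measure_regions algebra_simps mult_right_mono)
  show "k * core_resistance a b kper k \<le> (measure lebesgue (Df_set a) / kstar kper
      + measure lebesgue (Dc_set a b) * (2 / \<alpha>)) * k"
  proof -
    have "measure lebesgue (Dc_set a b) * (k * coupling_avg k) \<le> measure lebesgue (Dc_set a b) * (k * (2 / \<alpha>))"
      using coupling_avg_bounds(2)[OF k] k a_lt_b by (intro mult_left_mono) (auto simp: measure_regions)
    then show ?thesis by (simp add: core_resistance_def algebra_simps)
  qed
qed (use a_lt_b a_pos in \<open>simp add: measure_regions\<close>)

lemma scaled_core_resistance_kstar_lt: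
  assumes "\<nexists>c. AE y in lebesgue. kper y = c"
  shows "kstar kper * core_resistance a b kper (kstar kper) < measure lebesgue (Dc_set a b \<union> Df_set a)"
proof -
  have "measure lebesgue (Dc_set a b) * (kstar kper * coupling_avg (kstar kper)) < measure lebesgue (Dc_set a b)"
    using kstar_mult_coupling_avg_lt_1[OF assms] a_lt_b by (simp add: measure_regions)
  then show ?thesis
    using kstar_pos unfolding core_resistance_def by (simp add: measure_regions algebra_simps)
qed

lemma minimizer_flux_law:
  "\<forall>kbar>0. \<forall>ubar gbar u g. is_minimizer a b L kper \<epsilon> kbar ubar gbar u g \<longrightarrow>
     (\<exists>m. (AE x in lebesgue. x \<in> D_set b L \<longrightarrow> gbar x = m / kbar) \<and>
          measure lebesgue (D_set b L \<union> Dc_set a b \<union> Df_set a) =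
            m * (measure lebesgue (D_set b L) / kbar
                 + measure lebesgue (Df_set a) / kstar kper
                 + measure lebesgue (Dc_set a b) * cell_avg (\<lambda>y. 2 / (kbar + kper y))))"
proof (intro allI impI)
  fix kbar ubar gbar u g
  assume kbar: "0 < kbar" and mn: "is_minimizer a b L kper \<epsilon> kbar ubar gbar u g"
  show "\<exists>m. (AE x in lebesgue. x \<in> D_set b L \<longrightarrow> gbar x = m / kbar) \<and>
          measure lebesgue (D_set b L \<union> Dc_set a b \<union> Df_set a) =
            m * (measure lebesgue (D_set b L) / kbar
                 + measure lebesgue (Df_set a) / kstar kper
                 + measure lebesgue (Dc_set a b) * cell_avg (\<lambda>y. 2 / (kbar + kper y)))"
    using minimizer_gradient_on_D[OF kbar mn] flux_mult_total_resistance[OF kbar]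
    unfolding total_resistance_def core_resistance_def by (auto simp: add.assoc)
qed

lemma optimal_conductivity:
  assumes exists_min: "\<forall>kbar>0. \<exists>ubar gbar u g. is_minimizer a b L kper \<epsilon> kbar ubar gbar u g"
  shows "\<exists>kopt>0.
        (\<forall>kbar>0. kbar \<noteq> kopt \<longrightarrow> J1D a b L kper \<epsilon> kopt < J1D a b L kper \<epsilon> kbar) \<and>
        measure lebesgue (Dc_set a b \<union> Df_set a) =
          measure lebesgue (Df_set a) * kopt / kstar kper
          + measure lebesgue (Dc_set a b) * kopt * cell_avg (\<lambda>y. 2 / (kopt + kper y)) \<and>
        (\<forall>k>0. measure lebesgue (Dc_set a b \<union> Df_set a) =
            measure lebesgue (Df_set a) * k / kstar kper
            + measure lebesgue (Dc_set a b) * k * cell_avg (\<lambda>y. 2 / (k + kper y)) \<longrightarrow> k = kopt) \<and>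
        ((\<nexists>c. AE y in lebesgue. kper y = c) \<longrightarrow> kopt > kstar kper)"
proof -
  define R where "R k = k * core_resistance a b kper k" for k
  define M where "M = measure lebesgue (Dc_set a b \<union> Df_set a)"
  obtain kopt where kopt: "0 < kopt" "R kopt = M"
    using scaled_core_resistance_root unfolding R_def M_def by blast
  have uniq: "k = kopt" if "0 < k" "R k = M" for k
    using scaled_core_resistance_strict_mono[of k kopt] scaled_core_resistance_strict_mono[of kopt k]
      that kopt unfolding R_def by (cases k kopt rule: linorder_cases) simp_all
  have J: "J1D a b L kper \<epsilon> k = measure lebesgue (D_set b L) * ((M - R k) / (measure lebesgue (D_set b L) + R k))^2"
    if "0 < k" for k
    using J1D_eq[OF that] exists_min flux_div_minus_one(1)[OF that] that unfolding R_def M_def by simp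
  show ?thesis
    unfolding scaled_core_resistance_eq M_def[symmetric] R_def[symmetric]
  proof (intro exI conjI allI impI)
    show "0 < kopt" "M = R kopt" using kopt by simp_all
    show "k = kopt" if "0 < k" "M = R k" for k using uniq that by simp
  next
    fix kbar assume kbar: "0 < kbar" "kbar \<noteq> kopt"
    then have "(M - R kbar) / (measure lebesgue (D_set b L) + R kbar) \<noteq> 0"
      using uniq flux_div_minus_one(2)[OF kbar(1)] unfolding R_def by fastforce
    then show "J1D a b L kper \<epsilon> kopt < J1D a b L kper \<epsilon> kbar"
      using J[OF kopt(1)] J[OF kbar(1)] kopt(2) b_lt_L by (simp add: measure_regions)
  next
    assume "\<nexists>c. AE y in lebesgue. kper y = c"
    then have "R (kstar kper) < R kopt"
      using scaled_core_resistance_kstar_lt kopt(2) unfolding R_def M_def by simp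
    then show "kstar kper < kopt"
      using scaled_core_resistance_strict_mono[of kopt "kstar kper"] kopt(1) unfolding R_def
      by (cases kopt "kstar kper" rule: linorder_cases) auto
  qed
qed

end

theorem mainTheorem4:
  fixes a b L \<epsilon> \<alpha> \<beta> :: real and kper :: "real \<Rightarrow> real"
  assumes geom: "0 < a" "a < b" "b < L"
    and eps: "0 < \<epsilon>" "\<exists>n::nat. 2 * a = real n * \<epsilon>" "\<exists>n::nat. b - a = real n * \<epsilon>"
    and kmeas: "kper \<in> borel_measurable lebesgue"
    and kperiodic: "\<forall>x. kper (x + 1) = kper x"
    and kbounds: "0 < \<alpha>" "\<forall>x. \<alpha> \<le> kper x \<and> kper x \<le> \<beta>"
    and exists_min: "\<forall>kbar>0. \<exists>ubar gbar u g. is_minimizer a b L kper \<epsilon> kbar ubar gbar u g"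
  shows
    "(\<forall>kbar>0. \<forall>ubar gbar u g. is_minimizer a b L kper \<epsilon> kbar ubar gbar u g \<longrightarrow>
        (\<exists>m. (AE x in lebesgue. x \<in> D_set b L \<longrightarrow> gbar x = m / kbar) \<and>
             measure lebesgue (D_set b L \<union> Dc_set a b \<union> Df_set a) =
               m * (measure lebesgue (D_set b L) / kbar
                    + measure lebesgue (Df_set a) / kstar kper
                    + measure lebesgue (Dc_set a b) * cell_avg (\<lambda>y. 2 / (kbar + kper y)))))
   \<and> (\<exists>kopt>0.
        (\<forall>kbar>0. kbar \<noteq> kopt \<longrightarrow> J1D a b L kper \<epsilon> kopt < J1D a b L kper \<epsilon> kbar) \<and>
        measure lebesgue (Dc_set a b \<union> Df_set a) =
          measure lebesgue (Df_set a) * kopt / kstar kper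
          + measure lebesgue (Dc_set a b) * kopt * cell_avg (\<lambda>y. 2 / (kopt + kper y)) \<and>
        (\<forall>k>0. measure lebesgue (Dc_set a b \<union> Df_set a) =
            measure lebesgue (Df_set a) * k / kstar kper
            + measure lebesgue (Dc_set a b) * k * cell_avg (\<lambda>y. 2 / (k + kper y)) \<longrightarrow> k = kopt) \<and>
        ((\<nexists>c. AE y in lebesgue. kper y = c) \<longrightarrow> kopt > kstar kper))"
proof -
  interpret homogenization a b L kper \<alpha> \<beta> \<epsilon>
    using assms by unfold_locales auto
  show ?thesis using minimizer_flux_law optimal_conductivity[OF exists_min] by blast
qed

end
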